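(* Let $E$ be an sc-Banach space and $V=[0,\infty)^l\times\mathbb R^{n-l}\subset\mathbb R^n$. Let $f:\mathcal O(V\oplus E,0)\to(E,0)$ be an $\mathrm{sc}^0$-contraction germ which is of class $\mathrm{sc}^1$. Then the unique $\mathrm{sc}^0$-germ $\delta:\mathcal O(V,0)\to(E,0)$ satisfying $f(v,\delta(v))=0$ is also of class $\mathrm{sc}^1$.
   Context: An sc-Banach space is a Banach space $E$ with a nested sequence of Banach spaces $E=E_0\supset E_1\supset\cdots$ such that for $m<n$ the inclusion $E_n\to E_m$ is compact and $E_\infty=\bigcap_mE_m$ is dense in every $E_m$; $\|\cdot\|_m$ denotes the norm of $E_m$. Finite-dimensional spaces carry the constant structure, direct sums the levelwise one. For a closed subset $C$ of an sc-Banach space $E$, $C_m=C\cap E_m$; a germ of neighborhoods $\mathcal O(C,0)$ is a decreasing sequence $U_0\supset U_1\supset\cdots$ with $U_m$ a relatively open neighborhood of $0$ in $C_m$. An $\mathrm{sc}^0$-germ $f:\mathcal O(C,0)\to(F,0)$ is a continuous $f:U_0\to F_0$ with $f(0)=0$, $f(U_m)\subset F_m$ and $f:U_m\to F_m$ continuous for all $m$. The tangent germ $T\mathcal O(C,0)$ is the sequence $(U_{m+1}\oplus E_m)_{m\ge0}$ in the sc-Banach space $TE=E_1\oplus E_0$ with levels $(TE)_m=E_{m+1}\oplus E_m$. An $\mathrm{sc}^0$-germ $f$ is of class $\mathrm{sc}^1$ if for every $x\in U_1$ there is $Df(x)\in\mathcal L(E_0,F_0)$ with $\|f(x+h)-f(x)-Df(x)h\|_0/\|h\|_1\to0$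 as $\|h\|_1\to0$ ($x+h\in U_1$), and the tangent map $Tf(x,h)=(f(x),Df(x)h)$ maps $U_{m+1}\oplus E_m$ into $F_{m+1}\oplus F_m$ and is an $\mathrm{sc}^0$-germ $T\mathcal O(C,0)\to(TF,0)$. An $\mathrm{sc}^0$-contraction germ is an $\mathrm{sc}^0$-germ $f:\mathcal O(V\oplus E,0)\to(E,0)$ of the form $f(v,u)=u-B(v,u)$ such that for every $m\ge0$ and every $0<\varepsilon<1$, $\|B(v,u)-B(v,u')\|_m\le\varepsilon\|u-u'\|_m$ for all $(v,u),(v,u')$ sufficiently close to $(0,0)$ in $V\oplus E_m$ (closeness depending on $m,\varepsilon$). Such a germ has a unique $\mathrm{sc}^0$-solution germ $\delta$ with $f(v,\delta(v))=0$. *)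

theory Defs
  imports "HOL-Analysis.Analysis"
begin

text \<open>A graded (leveled) structure on a real vector space type is a pair (L, N):
  L m is the level-m subspace E_m and N m is its norm.\<close>

definition level_norm :: "'a::real_vector set \<Rightarrow> ('a \<Rightarrow> real) \<Rightarrow> bool" where
  "level_norm S n \<longleftrightarrow>
     0 \<in> S \<and> (\<forall>x\<in>S. \<forall>y\<in>S. x + y \<in> S) \<and> (\<forall>c. \<forall>x\<in>S. c *\<^sub>R x \<in> S) \<and>
     (\<forall>x\<in>S. 0 \<le> n x \<and> (n x = 0 \<longleftrightarrow> x = 0)) \<and>
     (\<forall>c. \<forall>x\<in>S. n (c *\<^sub>R x) = \<bar>c\<bar> * n x) \<and>
     (\<forall>x\<in>S. \<forall>y\<in>S. n (x + y) \<le> n x + n y)"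

definition level_complete :: "'a::real_vector set \<Rightarrow> ('a \<Rightarrow> real) \<Rightarrow> bool" where
  "level_complete S n \<longleftrightarrow>
     (\<forall>x :: nat \<Rightarrow> 'a. (\<forall>k. x k \<in> S) \<and>
        (\<forall>e>0. \<exists>K. \<forall>i\<ge>K. \<forall>j\<ge>K. n (x i - x j) < e) \<longrightarrow>
        (\<exists>y\<in>S. (\<lambda>k. n (x k - y)) \<longlonglongrightarrow> 0))"

definition sc_banach :: "(nat \<Rightarrow> 'a::banach set) \<Rightarrow> (nat \<Rightarrow> 'a \<Rightarrow> real) \<Rightarrow> bool" where
  "sc_banach L N \<longleftrightarrow>
     L 0 = UNIV \<and> (\<forall>x. N 0 x = norm x) \<and>
     (\<forall>m. L (Suc m) \<subseteq> L m) \<and>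
     (\<forall>m. level_norm (L m) (N m) \<and> level_complete (L m) (N m)) \<and>
     \<comment> \<open>compactness of the inclusions E_n \<rightarrow> E_m, m < n\<close>
     (\<forall>m n. m < n \<longrightarrow>
        (\<forall>x :: nat \<Rightarrow> 'a. (\<forall>k. x k \<in> L n) \<and> (\<exists>B. \<forall>k. N n (x k) \<le> B) \<longrightarrow>
           (\<exists>r y. strict_mono r \<and> y \<in> L m \<and> (\<lambda>k. N m (x (r k) - y)) \<longlonglongrightarrow> 0))) \<and>
     \<comment> \<open>density of E_\<infinity> in every E_m\<close>
     (\<forall>m. \<forall>x\<in>L m. \<forall>e>0. \<exists>y\<in>(\<Inter>k. L k). N m (x - y) < e)"

definition const_levels :: "nat \<Rightarrow> 'a set" where "const_levels m = UNIV"
definition const_norms :: "nat \<Rightarrow> 'a::real_normed_vector \<Rightarrow> real" where "const_norms m = norm"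

definition sum_levels :: "(nat \<Rightarrow> 'a set) \<Rightarrow> (nat \<Rightarrow> 'b set) \<Rightarrow> nat \<Rightarrow> ('a \<times> 'b) set" where
  "sum_levels LA LB m = LA m \<times> LB m"
definition sum_norms :: "(nat \<Rightarrow> 'a \<Rightarrow> real) \<Rightarrow> (nat \<Rightarrow> 'b \<Rightarrow> real) \<Rightarrow> nat \<Rightarrow> 'a \<times> 'b \<Rightarrow> real" where
  "sum_norms NA NB m p = sqrt ((NA m (fst p))\<^sup>2 + (NB m (snd p))\<^sup>2)"

definition tan_levels :: "(nat \<Rightarrow> 'a set) \<Rightarrow> nat \<Rightarrow> ('a \<times> 'a) set" where
  "tan_levels L m = L (Suc m) \<times> L m"
definition tan_norms :: "(nat \<Rightarrow> 'a \<Rightarrow> real) \<Rightarrow> nat \<Rightarrow> 'a \<times> 'a \<Rightarrow> real" where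
  "tan_norms N m p = sqrt ((N (Suc m) (fst p))\<^sup>2 + (N m (snd p))\<^sup>2)"

definition nbhd_germ :: "(nat \<Rightarrow> 'a::real_vector set) \<Rightarrow> (nat \<Rightarrow> 'a \<Rightarrow> real) \<Rightarrow> 'a set \<Rightarrow> (nat \<Rightarrow> 'a set) \<Rightarrow> bool" where
  "nbhd_germ LA NA C U \<longleftrightarrow>
     (\<forall>m. U (Suc m) \<subseteq> U m) \<and>
     (\<forall>m. U m \<subseteq> C \<inter> LA m \<and> 0 \<in> U m \<and>
        (\<forall>x\<in>U m. \<exists>e>0. \<forall>y\<in>C \<inter> LA m. NA m (y - x) < e \<longrightarrow> y \<in> U m))"

definition sc0_map :: "(nat \<Rightarrow> 'a::real_vector \<Rightarrow> real) \<Rightarrow> (nat \<Rightarrow> 'a set) \<Rightarrow>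
     (nat \<Rightarrow> 'b::real_vector set) \<Rightarrow> (nat \<Rightarrow> 'b \<Rightarrow> real) \<Rightarrow> ('a \<Rightarrow> 'b) \<Rightarrow> bool" where
  "sc0_map NA U LF NF f \<longleftrightarrow>
     f 0 = 0 \<and>
     (\<forall>m. f ` U m \<subseteq> LF m) \<and>
     (\<forall>m. \<forall>x\<in>U m. \<forall>e>0. \<exists>d>0. \<forall>y\<in>U m. NA m (y - x) < d \<longrightarrow> NF m (f y - f x) < e)"

definition sc0_germ :: "(nat \<Rightarrow> 'a::real_vector set) \<Rightarrow> (nat \<Rightarrow> 'a \<Rightarrow> real) \<Rightarrow> 'a set \<Rightarrow> (nat \<Rightarrow> 'a set) \<Rightarrow>
     (nat \<Rightarrow> 'b::real_vector set) \<Rightarrow> (nat \<Rightarrow> 'b \<Rightarrow> real) \<Rightarrow> ('a \<Rightarrow> 'b) \<Rightarrow> bool" where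
  "sc0_germ LA NA C U LF NF f \<longleftrightarrow> nbhd_germ LA NA C U \<and> sc0_map NA U LF NF f"

definition sc1_germ :: "(nat \<Rightarrow> 'a::real_normed_vector set) \<Rightarrow> (nat \<Rightarrow> 'a \<Rightarrow> real) \<Rightarrow> 'a set \<Rightarrow> (nat \<Rightarrow> 'a set) \<Rightarrow>
     (nat \<Rightarrow> 'b::real_normed_vector set) \<Rightarrow> (nat \<Rightarrow> 'b \<Rightarrow> real) \<Rightarrow> ('a \<Rightarrow> 'b) \<Rightarrow> bool" where
  "sc1_germ LA NA C U LF NF f \<longleftrightarrow>
     sc0_germ LA NA C U LF NF f \<and>
     (\<exists>Df :: 'a \<Rightarrow> 'a \<Rightarrow> 'b.
        (\<forall>x\<in>U 1. bounded_linear (Df x) \<and>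
           (\<forall>e>0. \<exists>d>0. \<forall>h. x + h \<in> U 1 \<and> 0 < NA 1 h \<and> NA 1 h < d \<longrightarrow>
               norm (f (x + h) - f x - Df x h) \<le> e * NA 1 h)) \<and>
        (\<forall>m. (\<lambda>(x, h). (f x, Df x h)) ` (U (Suc m) \<times> LA m) \<subseteq> tan_levels LF m) \<and>
        sc0_map (tan_norms NA) (\<lambda>m. U (Suc m) \<times> LA m) (tan_levels LF) (tan_norms NF)
           (\<lambda>(x, h). (f x, Df x h)))"

text \<open>sc^0-contraction germ f(v,u) = u - B(v,u) on O(V \<oplus> E, 0).\<close>
definition sc0_contraction_germ ::
  "'v::real_normed_vector set \<Rightarrow> (nat \<Rightarrow> 'e::banach set) \<Rightarrow> (nat \<Rightarrow> 'e \<Rightarrow> real) \<Rightarrow>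
   (nat \<Rightarrow> ('v \<times> 'e) set) \<Rightarrow> ('v \<times> 'e \<Rightarrow> 'e) \<Rightarrow> bool" where
  "sc0_contraction_germ V L N U f \<longleftrightarrow>
     sc0_germ (sum_levels const_levels L) (sum_norms const_norms N) (V \<times> UNIV) U L N f \<and>
     (\<forall>m. \<forall>e. 0 < e \<and> e < 1 \<longrightarrow>
        (\<exists>r>0. \<forall>v u u'. (v, u) \<in> U m \<and> (v, u') \<in> U m \<and>
            sum_norms const_norms N m (v, u) < r \<and> sum_norms const_norms N m (v, u') < r \<longrightarrow>
            N m ((u - f (v, u)) - (u' - f (v, u'))) \<le> e * N m (u - u')))"

text \<open>The partial quadrant [0,\<infinity>)^l \<times> \<real>^(n-l), the nonnegative coordinates being those in I.\<close>
definition quadrant :: "'n::finite set \<Rightarrow> (real ^ 'n) set" where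
  "quadrant I = {v. \<forall>i\<in>I. 0 \<le> v $ i}"

end

theory Submission
  imports Defs
begin

text \<open>Differentiating \<open>f (v, \<delta> v) = 0\<close> forces \<open>D\<delta>(v) e\<close> to be the solution \<open>z\<close> of
  \<open>Df(v, \<delta> v)(e, z) = 0\<close>. Writing \<open>f (v, u) = u - B (v, u)\<close>, the fibre derivative \<open>DuB\<close> is a
  contraction with constant \<open>1/2\<close> on every level \<open>E_m\<close> near \<open>0\<close>: on the dense subspace
  \<open>E_(m+1)\<close> it is the limit of difference quotients of \<open>B\<close>, which are bounded in \<open>E_(m+1)\<close> and
  therefore converge in \<open>E_m\<close> by compactness of the inclusion. Hence \<open>z\<close> exists in \<open>E_m\<close> as a
  fixed point, is linear in \<open>e\<close> and depends continuously on \<open>(v, e)\<close>. Differentiability of \<open>\<delta>\<close>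
  follows from a mean value estimate along segments, where the same contraction absorbs the
  fibre part of the increment. All estimates hold on smaller neighbourhoods of \<open>0\<close>, on which the
  graph of \<open>\<delta>\<close> stays in the region where \<open>B\<close> contracts.\<close>

section \<open>Normed levels\<close>

context
  fixes S :: "'a::real_vector set" and n :: "'a \<Rightarrow> real"
  assumes S: "level_norm S n"
begin

lemma level_norm_zero: "0 \<in> S" "n 0 = 0"
  using S unfolding level_norm_def by auto

lemma level_norm_add_mem: "x \<in> S \<Longrightarrow> y \<in> S \<Longrightarrow> x + y \<in> S"
  using S unfolding level_norm_def by auto

lemma level_norm_scaleR_mem: "x \<in> S \<Longrightarrow> c *\<^sub>R x \<in> S"
  using S unfolding level_norm_def by auto

lemma level_norm_scaleR: "x \<in> S \<Longrightarrow> n (c *\<^sub>R x) = \<bar>c\<bar> * n x"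
  using S unfolding level_norm_def by auto

lemma level_norm_nonneg: "x \<in> S \<Longrightarrow> 0 \<le> n x"
  using S unfolding level_norm_def by auto

lemma level_norm_eq_0_iff: "x \<in> S \<Longrightarrow> n x = 0 \<longleftrightarrow> x = 0"
  using S unfolding level_norm_def by auto

lemma level_norm_triangle: "x \<in> S \<Longrightarrow> y \<in> S \<Longrightarrow> n (x + y) \<le> n x + n y"
  using S unfolding level_norm_def by auto

lemma level_norm_minus_mem: "x \<in> S \<Longrightarrow> - x \<in> S"
  using level_norm_scaleR_mem[of x "-1"] by simp

lemma level_norm_minus: "x \<in> S \<Longrightarrow> n (- x) = n x"
  using level_norm_scaleR[of x "-1"] by simp

lemma level_norm_diff_mem: "x \<in> S \<Longrightarrow> y \<in> S \<Longrightarrow> x - y \<in> S"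
  using level_norm_add_mem[OF _ level_norm_minus_mem, of x y] by simp

lemma level_norm_minus_commute: "x \<in> S \<Longrightarrow> y \<in> S \<Longrightarrow> n (x - y) = n (y - x)"
  using level_norm_minus[OF level_norm_diff_mem, of x y] by simp

lemma level_norm_triangle_diff: "x \<in> S \<Longrightarrow> y \<in> S \<Longrightarrow> n (x - y) \<le> n x + n y"
  using level_norm_triangle[OF _ level_norm_minus_mem, of x y] level_norm_minus[of y] by simp

lemma level_norm_triangle_sub:
  "x \<in> S \<Longrightarrow> y \<in> S \<Longrightarrow> z \<in> S \<Longrightarrow> n (x - z) \<le> n (x - y) + n (y - z)"
  using level_norm_triangle[OF level_norm_diff_mem level_norm_diff_mem, of x y y z] by simp

lemma level_norm_diff_le: "x \<in> S \<Longrightarrow> y \<in> S \<Longrightarrow> \<bar>n x - n y\<bar> \<le> n (x - y)"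
  using level_norm_triangle_sub[of x y 0] level_norm_triangle_sub[of y x 0]
    level_norm_zero level_norm_minus_commute[of x y] by (simp add: abs_le_iff)

lemma level_norm_tendsto:
  assumes "\<And>k. x k \<in> S" "y \<in> S" "(\<lambda>k. n (x k - y)) \<longlonglongrightarrow> 0"
  shows "(\<lambda>k. n (x k)) \<longlonglongrightarrow> n y"
proof -
  have "(\<lambda>k. n (x k) - n y) \<longlonglongrightarrow> 0"
    using assms(3) by (rule Lim_null_comparison[rotated]) (use level_norm_diff_le assms(1,2) in simp)
  then show ?thesis
    by (simp add: LIM_zero_iff)
qed

lemma level_norm_convex_ball: "convex {x \<in> S. n x < r}"
proof (rule convexI, clarify)
  fix x y and a b :: real
  assume x: "x \<in> S" "n x < r" and y: "y \<in> S" "n y < r" and ab: "0 \<le> a" "0 \<le> b" "a + b = 1"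
  have mem: "a *\<^sub>R x \<in> S" "b *\<^sub>R y \<in> S" using level_norm_scaleR_mem x y by auto
  have "n (a *\<^sub>R x + b *\<^sub>R y) \<le> a * n x + b * n y"
    using level_norm_triangle[OF mem] level_norm_scaleR x y ab by simp
  also have "\<dots> < r"
    using convex_bound_lt[OF x(2) y(2) ab] .
  finally show "a *\<^sub>R x + b *\<^sub>R y \<in> S \<and> n (a *\<^sub>R x + b *\<^sub>R y) < r"
    using level_norm_add_mem[OF mem] by simp
qed

lemma level_norm_geometric_cauchy:
  assumes z: "\<And>j. z j \<in> S" and c: "0 \<le> c" "c < 1"
    and step: "\<And>j. n (z (Suc j) - z j) \<le> c ^ j * a" and e: "e > 0"
  shows "\<exists>K. \<forall>i\<ge>K. \<forall>j\<ge>K. n (z i - z j) < e"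
proof -
  have a: "0 \<le> a"
    using step[of 0] level_norm_nonneg[OF level_norm_diff_mem[OF z z], of 1 0] by simp
  define \<beta> where "\<beta> j = c ^ j * a / (1 - c)" for j
  have tail: "n (z (j + k) - z j) \<le> \<beta> j" for j k
  proof -
    have "n (z (j + k) - z j) \<le> c ^ j * a * (1 - c ^ k) / (1 - c)"
    proof (induction k)
      case (Suc k)
      have "n (z (j + Suc k) - z j) \<le> n (z (Suc (j + k)) - z (j + k)) + n (z (j + k) - z j)"
        using level_norm_triangle_sub[OF z z z] by simp
      also have "\<dots> \<le> c ^ (j + k) * a + c ^ j * a * (1 - c ^ k) / (1 - c)"
        using step Suc by (rule add_mono)
      also have "\<dots> = c ^ j * a * (1 - c ^ Suc k) / (1 - c)"
        using c by (simp add: field_simps power_add)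
      finally show ?case .
    qed (simp add: level_norm_zero)
    also have "\<dots> \<le> \<beta> j"
      unfolding \<beta>_def using a c by (intro divide_right_mono mult_left_le) auto
    finally show ?thesis .
  qed
  have "\<beta> \<longlonglongrightarrow> 0"
    unfolding \<beta>_def using c by (auto intro!: tendsto_eq_intros LIMSEQ_power_zero)
  then obtain K where "\<forall>k\<ge>K. norm (\<beta> k - 0) < e / 2"
    using LIMSEQ_D[of \<beta> 0 "e / 2"] e by auto
  then have K: "\<beta> K < e / 2"
    by auto
  have near_K: "n (z i - z K) \<le> \<beta> K" if "i \<ge> K" for i
    using tail[of K "i - K"] that by simp
  have "n (z i - z j) < e" if "i \<ge> K" "j \<ge> K" for i j
  proof -
    have "n (z i - z j) \<le> n (z i - z K) + n (z j - z K)"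
      using level_norm_triangle_sub[OF z[of i] z[of K] z[of j]] level_norm_minus_commute[OF z z, of K j]
      by simp
    also have "\<dots> < e"
      using near_K[OF that(1)] near_K[OF that(2)] K by linarith
    finally show ?thesis .
  qed
  then show ?thesis by blast
qed

end

lemma level_norm_const_norms: "level_norm UNIV (const_norms m)"
  unfolding level_norm_def const_norms_def by (simp add: norm_triangle_ineq)

lemma sum_norms_Pair: "sum_norms NA NB m (a, b) = sqrt ((NA m a)\<^sup>2 + (NB m b)\<^sup>2)"
  by (simp add: sum_norms_def)

lemma level_norm_sum_norms:
  assumes A: "level_norm (LA m) (NA m)" and B: "level_norm (LB m) (NB m)"
  shows "level_norm (sum_levels LA LB m) (sum_norms NA NB m)"
  unfolding level_norm_def sum_levels_def
proof (intro conjI ballI allI; clarify?)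
  show "0 \<in> LA m \<times> LB m" using level_norm_zero[OF A] level_norm_zero[OF B] by (simp add: zero_prod_def)
next
  fix a b a' b' assume "a \<in> LA m" "b \<in> LB m" "a' \<in> LA m" "b' \<in> LB m"
  then show "(a, b) + (a', b') \<in> LA m \<times> LB m" using level_norm_add_mem[OF A] level_norm_add_mem[OF B] by auto
next
  fix c and a b assume "a \<in> LA m" "b \<in> LB m"
  then show "c *\<^sub>R (a, b) \<in> LA m \<times> LB m" using level_norm_scaleR_mem[OF A] level_norm_scaleR_mem[OF B] by auto
next
  fix a b assume "a \<in> LA m" "b \<in> LB m"
  then show "0 \<le> sum_norms NA NB m (a, b)" by (simp add: sum_norms_def)
next
  fix a b assume a: "a \<in> LA m" and b: "b \<in> LB m"
  show "sum_norms NA NB m (a, b) = 0 \<longleftrightarrow> (a, b) = 0"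
    using level_norm_eq_0_iff[OF A a] level_norm_eq_0_iff[OF B b]
    by (simp add: sum_norms_def zero_prod_def)
next
  fix c and a b assume a: "a \<in> LA m" and b: "b \<in> LB m"
  have "sum_norms NA NB m (c *\<^sub>R (a, b)) = sqrt (c\<^sup>2 * ((NA m a)\<^sup>2 + (NB m b)\<^sup>2))"
    using level_norm_scaleR[OF A a] level_norm_scaleR[OF B b]
    by (simp add: sum_norms_def power_mult_distrib distrib_left)
  then show "sum_norms NA NB m (c *\<^sub>R (a, b)) = \<bar>c\<bar> * sum_norms NA NB m (a, b)"
    by (simp add: real_sqrt_mult sum_norms_def)
next
  fix a b a' b' assume a: "a \<in> LA m" "a' \<in> LA m" and b: "b \<in> LB m" "b' \<in> LB m"
  have "NA m (a + a') \<le> NA m a + NA m a'" "NB m (b + b') \<le> NB m b + NB m b'"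
    using level_norm_triangle[OF A a] level_norm_triangle[OF B b] by auto
  then have "(NA m (a + a'))\<^sup>2 + (NB m (b + b'))\<^sup>2 \<le> (NA m a + NA m a')\<^sup>2 + (NB m b + NB m b')\<^sup>2"
    using level_norm_nonneg[OF A level_norm_add_mem[OF A a]]
      level_norm_nonneg[OF B level_norm_add_mem[OF B b]]
    by (intro add_mono power_mono) auto
  then have "sum_norms NA NB m ((a, b) + (a', b')) \<le> sqrt ((NA m a + NA m a')\<^sup>2 + (NB m b + NB m b')\<^sup>2)"
    by (simp add: sum_norms_def)
  also have "\<dots> \<le> sum_norms NA NB m (a, b) + sum_norms NA NB m (a', b')"
    unfolding sum_norms_Pair by (rule real_sqrt_sum_squares_triangle_ineq)
  finally show "sum_norms NA NB m ((a, b) + (a', b')) \<le> sum_norms NA NB m (a, b) + sum_norms NA NB m (a', b')" .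
qed

lemma sum_norms_le_add:
  "0 \<le> NA m a \<Longrightarrow> 0 \<le> NB m b \<Longrightarrow> sum_norms NA NB m (a, b) \<le> NA m a + NB m b"
  by (simp add: sum_norms_def sqrt_sum_squares_le_sum)

lemma sum_norms_ge: "NA m a \<le> sum_norms NA NB m (a, b)" "NB m b \<le> sum_norms NA NB m (a, b)"
  by (simp_all add: sum_norms_def)

lemma tan_norms_eq_sum_norms: "tan_norms N = sum_norms (\<lambda>m. N (Suc m)) N"
  by (simp add: fun_eq_iff tan_norms_def sum_norms_def)

lemma level_contraction_fixpoint:
  assumes S: "level_norm S n" and complete: "level_complete S n"
    and maps: "\<And>x. x \<in> S \<Longrightarrow> T x \<in> S" and c: "0 \<le> c" "c < 1"
    and contr: "\<And>x y. x \<in> S \<Longrightarrow> y \<in> S \<Longrightarrow> n (T x - T y) \<le> c * n (x - y)"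
  shows "\<exists>z\<in>S. T z = z"
proof -
  define z where "z j = (T ^^ j) 0" for j
  have zS: "z j \<in> S" for j
    by (induction j) (auto simp: z_def level_norm_zero[OF S] maps)
  have z_Suc: "z (Suc j) = T (z j)" for j
    by (simp add: z_def)
  have "n (z (Suc j) - z j) \<le> c ^ j * n (z 1 - z 0)" for j
  proof (induction j)
    case (Suc j)
    have "n (z (Suc (Suc j)) - z (Suc j)) \<le> c * n (z (Suc j) - z j)"
      using contr[OF zS[of "Suc j"] zS[of j]] by (simp add: z_Suc)
    also have "\<dots> \<le> c * (c ^ j * n (z 1 - z 0))"
      using Suc c by (simp add: mult_left_mono)
    finally show ?case by simp
  qed simp
  then have "\<exists>K. \<forall>i\<ge>K. \<forall>j\<ge>K. n (z i - z j) < e" if "e > 0" for e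
    using level_norm_geometric_cauchy[OF S, of z c "n (z 1 - z 0)" e] zS c that by blast
  then obtain y where y: "y \<in> S" "(\<lambda>k. n (z k - y)) \<longlonglongrightarrow> 0"
    using complete zS unfolding level_complete_def by blast
  have "n (T y - y) \<le> c * n (z k - y) + n (z (Suc k) - y)" for k
  proof -
    have "n (T y - y) \<le> n (T y - T (z k)) + n (T (z k) - y)"
      using level_norm_triangle_sub[OF S maps[OF y(1)] maps[OF zS] y(1)] .
    also have "\<dots> \<le> c * n (y - z k) + n (z (Suc k) - y)"
      using contr[OF y(1) zS] by (simp add: z_Suc)
    finally show ?thesis
      using level_norm_minus_commute[OF S y(1) zS] by simp
  qed
  moreover have "(\<lambda>k. c * n (z k - y) + n (z (Suc k) - y)) \<longlonglongrightarrow> 0"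
    using y(2) LIMSEQ_Suc[OF y(2)] by (auto intro!: tendsto_eq_intros)
  ultimately have "n (T y - y) \<le> 0"
    by (intro LIMSEQ_le_const) auto
  then have "T y - y = 0"
    using level_norm_nonneg[OF S] level_norm_eq_0_iff[OF S] level_norm_diff_mem[OF S maps[OF y(1)] y(1)]
    by (meson order_antisym)
  then show ?thesis using y(1) by auto
qed

lemma level_norm_linear_bound:
  assumes S: "level_norm S n" and S': "level_norm S' n'"
    and maps: "\<And>x. x \<in> S \<Longrightarrow> T x \<in> S'" and scale: "\<And>c x. x \<in> S \<Longrightarrow> T (c *\<^sub>R x) = c *\<^sub>R T x"
    and d: "d > 0" and ball: "\<And>x. x \<in> S \<Longrightarrow> n x < d \<Longrightarrow> n' (T x) \<le> 1"
    and x: "x \<in> S"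
  shows "n' (T x) \<le> 2 / d * n x"
proof (cases "x = 0")
  case True
  then show ?thesis
    using scale[OF x, of 0] level_norm_zero[OF S] level_norm_zero[OF S'] by simp
next
  case False
  then have nx: "n x > 0"
    using level_norm_nonneg[OF S x] level_norm_eq_0_iff[OF S x] by linarith
  define c where "c = d / (2 * n x)"
  have c: "c > 0" using nx d by (simp add: c_def)
  have "n (c *\<^sub>R x) < d"
    using level_norm_scaleR[OF S x, of c] c nx d by (simp add: c_def)
  then have "c * n' (T x) \<le> 1"
    using ball[OF level_norm_scaleR_mem[OF S x, of c]] scale[OF x] level_norm_scaleR[OF S' maps[OF x]] c
    by simp
  then show ?thesis
    using c nx by (simp add: c_def field_simps)
qed

lemma level_norm_bound_by_density:
  assumes S: "level_norm S n" and D: "D \<subseteq> S" "\<And>x e. x \<in> S \<Longrightarrow> e > 0 \<Longrightarrow> \<exists>y\<in>D. n (x - y) < e"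
    and maps: "\<And>x. x \<in> S \<Longrightarrow> T x \<in> S" and diff: "\<And>x y. x \<in> S \<Longrightarrow> y \<in> S \<Longrightarrow> T (x - y) = T x - T y"
    and bounded: "\<And>x. x \<in> S \<Longrightarrow> n (T x) \<le> K * n x" and K: "0 \<le> K"
    and on_D: "\<And>y. y \<in> D \<Longrightarrow> n (T y) \<le> c * n y" and c: "0 \<le> c"
    and x: "x \<in> S"
  shows "n (T x) \<le> c * n x"
proof (rule field_le_epsilon)
  fix e :: real assume e: "e > 0"
  define \<eta> where "\<eta> = e / (K + c + 1)"
  have \<eta>: "\<eta> > 0" using e K c by (simp add: \<eta>_def)
  obtain y where y: "y \<in> D" "n (x - y) < \<eta>" using D(2)[OF x \<eta>] by blast
  have yS: "y \<in> S" using y(1) D(1) by blast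
  have xy: "x - y \<in> S" using level_norm_diff_mem[OF S x yS] .
  have "n (T x) \<le> n (T (x - y)) + n (T y)"
    using level_norm_triangle[OF S maps[OF xy] maps[OF yS]] diff[OF x yS] by simp
  also have "\<dots> \<le> K * \<eta> + c * (n x + \<eta>)"
  proof (rule add_mono)
    show "n (T (x - y)) \<le> K * \<eta>"
      using bounded[OF xy] y(2) K by (meson less_imp_le mult_left_mono order_trans)
    have "n y \<le> n x + n (x - y)"
      using level_norm_triangle_diff[OF S x xy] by simp
    then show "n (T y) \<le> c * (n x + \<eta>)"
      using on_D[OF y(1)] y(2) c by (smt (verit) mult_left_mono)
  qed
  also have "\<dots> = (K + c) * \<eta> + c * n x"
    by (simp add: algebra_simps)
  also have "\<dots> \<le> c * n x + e"
  proof -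
    have "(K + c) * \<eta> \<le> e"
      using e K c by (simp add: \<eta>_def field_simps)
    then show ?thesis by simp
  qed
  finally show "n (T x) \<le> c * n x + e" .
qed

lemma linear_diff_le_basis:
  fixes S T :: "real ^ 'n \<Rightarrow> 'b::real_normed_vector"
  assumes "linear S" "linear T" and basis: "\<And>i. norm (S (axis i 1) - T (axis i 1)) \<le> \<eta>"
  shows "norm (S h - T h) \<le> real CARD('n) * \<eta> * norm h"
proof -
  have lin: "linear (\<lambda>h. S h - T h)" using assms(1,2) by (rule linear_compose_sub)
  have "S h - T h = (\<Sum>i\<in>UNIV. (h $ i) *\<^sub>R (S (axis i 1) - T (axis i 1)))"
    using linear_sum[OF lin, of "\<lambda>i. (h $ i) *\<^sub>R axis i 1" UNIV] basis_expansion[of h]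
      linear_scale[OF lin] by (simp add: scalar_mult_eq_scaleR)
  also have "norm \<dots> \<le> (\<Sum>i\<in>UNIV. norm ((h $ i) *\<^sub>R (S (axis i 1) - T (axis i 1))))"
    by (rule norm_sum)
  also have "\<dots> \<le> (\<Sum>i\<in>(UNIV :: 'n set). norm h * \<eta>)"
  proof (rule sum_mono)
    fix i
    show "norm ((h $ i) *\<^sub>R (S (axis i 1) - T (axis i 1))) \<le> norm h * \<eta>"
      using component_le_norm_cart[of h i] basis[of i] by (simp add: mult_mono)
  qed
  finally show ?thesis by (simp add: algebra_simps)
qed

lemma finite_common_radius:
  fixes P :: "'i \<Rightarrow> real \<Rightarrow> bool"
  assumes "finite A" and radius: "\<And>i. i \<in> A \<Longrightarrow> \<exists>d>0. P i d"
    and smaller: "\<And>i d d'. P i d \<Longrightarrow> 0 < d' \<Longrightarrow> d' \<le> d \<Longrightarrow> P i d'"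
  shows "\<exists>d>0. \<forall>i\<in>A. P i d"
  using assms(1) radius
proof (induction A rule: finite_induct)
  case empty
  then show ?case by (auto intro: exI[of _ 1])
next
  case (insert j A)
  obtain d where d: "d > 0" "\<forall>i\<in>A. P i d"
    using insert by blast
  obtain d' where d': "d' > 0" "P j d'"
    using insert by blast
  have "\<forall>i\<in>insert j A. P i (min d d')"
    using d d' smaller by (auto simp: min_def)
  then show ?case
    using d(1) d'(1) by (intro exI[of _ "min d d'"]) auto
qed

lemma convex_quadrant: "convex (quadrant I)"
  by (rule convexI) (auto simp: quadrant_def)

section \<open>sc-Banach spaces\<close>

locale sc_banach_space =
  fixes L :: "nat \<Rightarrow> 'e::banach set" and N :: "nat \<Rightarrow> 'e \<Rightarrow> real"
  assumes sc_banach: "sc_banach L N"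
begin

lemma level_0: "L 0 = UNIV" and norm_level_0: "N 0 = norm"
  using sc_banach unfolding sc_banach_def by auto

lemma level_norm: "level_norm (L m) (N m)" and level_complete: "level_complete (L m) (N m)"
  using sc_banach unfolding sc_banach_def by auto

lemma level_Suc_subset: "L (Suc m) \<subseteq> L m"
  using sc_banach unfolding sc_banach_def by auto

lemma level_antimono: "m \<le> n \<Longrightarrow> L n \<subseteq> L m"
  by (induction n rule: dec_induct) (use level_Suc_subset in auto)

lemma compact_inclusion:
  fixes x :: "nat \<Rightarrow> 'e"
  assumes "m < n" "\<And>k. x k \<in> L n" "\<And>k. N n (x k) \<le> B"
  shows "\<exists>r y. strict_mono r \<and> y \<in> L m \<and> (\<lambda>k. N m (x (r k) - y)) \<longlonglongrightarrow> 0"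
  using sc_banach[unfolded sc_banach_def, THEN conjunct2, THEN conjunct2, THEN conjunct2,
      THEN conjunct2, THEN conjunct1, rule_format, of m n x] assms
  by blast

lemma smooth_points_dense: "x \<in> L m \<Longrightarrow> e > 0 \<Longrightarrow> \<exists>y\<in>(\<Inter>k. L k). N m (x - y) < e"
  using sc_banach[unfolded sc_banach_def, THEN conjunct2, THEN conjunct2, THEN conjunct2,
      THEN conjunct2, THEN conjunct2] by blast

text \<open>Continuity of the inclusions follows from their compactness.\<close>
lemma level_norm_le_level_norm:
  assumes "m \<le> n"
  shows "\<exists>C>0. \<forall>x\<in>L n. N m x \<le> C * N n x"
proof (cases "m = n")
  case True
  then show ?thesis by (intro exI[of _ 1]) auto
next
  case False
  with assms have mn: "m < n" by simp
  show ?thesis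
  proof (rule ccontr)
    assume unbounded: "\<not> ?thesis"
    have "\<exists>x\<in>L n. N m x > (real k + 1) * N n x" for k :: nat
    proof -
      have "real k + 1 > 0" by simp
      then show ?thesis using unbounded not_le by blast
    qed
    then obtain x where x: "\<And>k. x k \<in> L n" "\<And>k. N m (x k) > (real k + 1) * N n (x k)"
      by metis
    have Nx: "N n (x k) > 0" for k
    proof -
      have "x k \<noteq> 0"
        using x(2)[of k] level_norm_zero[OF level_norm] by auto
      then show ?thesis
        using level_norm_nonneg[OF level_norm x(1)] level_norm_eq_0_iff[OF level_norm x(1)]
        by (metis less_eq_real_def)
    qed
    define y where "y k = (1 / N n (x k)) *\<^sub>R x k" for k
    have y: "y k \<in> L n" "N n (y k) = 1" for k
      using level_norm_scaleR_mem[OF level_norm x(1)] level_norm_scaleR[OF level_norm x(1)] Nx[of k]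
      by (auto simp: y_def)
    have y_large: "N m (y k) > real k + 1" for k
    proof -
      have "x k \<in> L m" using x(1) level_antimono[OF assms] by blast
      then have "N m (y k) = N m (x k) / N n (x k)"
        using level_norm_scaleR[OF level_norm, of "x k" m] Nx[of k] by (simp add: y_def)
      then show ?thesis
        using x(2)[of k] Nx[of k] by (simp add: pos_less_divide_eq)
    qed
    obtain r y0 where r: "strict_mono r" "y0 \<in> L m" "(\<lambda>k. N m (y (r k) - y0)) \<longlonglongrightarrow> 0"
      using compact_inclusion[of m n y 1] mn y by auto
    have "(\<lambda>k. N m (y (r k))) \<longlonglongrightarrow> N m y0"
      using level_norm_tendsto[OF level_norm _ r(2,3)] y(1) level_antimono[OF assms] by blast
    then obtain K where K: "\<forall>k\<ge>K. norm (N m (y (r k)) - N m y0) < 1"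
      using LIMSEQ_D[of _ "N m y0" 1] by auto
    obtain k0 :: nat where "N m y0 \<le> real k0"
      using real_arch_simple by blast
    define k where "k = max K k0"
    have k: "k \<ge> K" "real k \<ge> N m y0"
      using \<open>N m y0 \<le> real k0\<close> by (auto simp: k_def)
    have "N m (y (r k)) < 1 + real k"
      using K[rule_format, OF k(1)] k(2) by simp
    also have "\<dots> \<le> real (r k) + 1"
      using seq_suble[OF r(1), of k] by simp
    finally show False
      using y_large[of "r k"] by simp
  qed
qed

lemma norm_le_level_norm: "\<exists>C>0. \<forall>x\<in>L m. norm x \<le> C * N m x"
  using level_norm_le_level_norm[of 0 m] by (simp add: norm_level_0)

lemma level_limit:
  fixes x :: "nat \<Rightarrow> 'e"
  assumes mn: "m < n" and x: "\<And>k. x k \<in> L n" "\<And>k. N n (x k) \<le> B" "\<And>k. N m (x k) \<le> b"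
    and lim: "x \<longlonglongrightarrow> y"
  shows "y \<in> L m" "N m y \<le> b"
proof -
  obtain r y' where r: "strict_mono r" "y' \<in> L m" "(\<lambda>k. N m (x (r k) - y')) \<longlonglongrightarrow> 0"
    using compact_inclusion[of m n x B] mn x by blast
  obtain C where C: "C > 0" "\<And>z. z \<in> L m \<Longrightarrow> norm z \<le> C * N m z"
    using norm_le_level_norm by blast
  have xm: "x k \<in> L m" for k
    using x(1) level_antimono[of m n] mn by auto
  have "(\<lambda>k. x (r k) - y') \<longlonglongrightarrow> 0"
  proof (rule Lim_null_comparison)
    show "\<forall>\<^sub>F k in sequentially. norm (x (r k) - y') \<le> C * N m (x (r k) - y')"
      using C(2) level_norm_diff_mem[OF level_norm xm r(2)] by simp
    show "(\<lambda>k. C * N m (x (r k) - y')) \<longlonglongrightarrow> 0"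
      using tendsto_mult_right_zero[OF r(3)] .
  qed
  then have "(\<lambda>k. x (r k)) \<longlonglongrightarrow> y'"
    by (simp add: LIM_zero_iff)
  moreover have "(\<lambda>k. x (r k)) \<longlonglongrightarrow> y"
    using LIMSEQ_subseq_LIMSEQ[OF lim r(1)] by (simp add: o_def)
  ultimately have "y = y'"
    using LIMSEQ_unique by blast
  then show "y \<in> L m"
    using r(2) by simp
  have "(\<lambda>k. N m (x (r k))) \<longlonglongrightarrow> N m y"
    using level_norm_tendsto[OF level_norm xm r(2,3)] \<open>y = y'\<close> by simp
  then show "N m y \<le> b"
    using x(3) by (intro LIMSEQ_le_const2) auto
qed

end

section \<open>Contraction germs of class \<open>sc\<^sup>1\<close>\<close>

locale implicit_sc1 = sc_banach_space L N
  for L :: "nat \<Rightarrow> 'e::banach set" and N +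
  fixes I :: "'n::finite set"
    and U :: "nat \<Rightarrow> ((real ^ 'n) \<times> 'e) set" and f :: "(real ^ 'n) \<times> 'e \<Rightarrow> 'e"
    and W :: "nat \<Rightarrow> (real ^ 'n) set" and \<delta> :: "real ^ 'n \<Rightarrow> 'e"
    and Df :: "(real ^ 'n) \<times> 'e \<Rightarrow> (real ^ 'n) \<times> 'e \<Rightarrow> 'e"
  assumes contraction: "sc0_contraction_germ (quadrant I) L N U f"
    and Df_derivative: "\<forall>x\<in>U 1. bounded_linear (Df x) \<and>
           (\<forall>e>0. \<exists>d>0. \<forall>h. x + h \<in> U 1 \<and> 0 < sum_norms const_norms N 1 h \<and>
              sum_norms const_norms N 1 h < d \<longrightarrow>
              norm (f (x + h) - f x - Df x h) \<le> e * sum_norms const_norms N 1 h)"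
    and tangent_image: "\<forall>m. (\<lambda>(x, h). (f x, Df x h)) ` (U (Suc m) \<times> sum_levels const_levels L m)
           \<subseteq> tan_levels L m"
    and tangent_sc0: "sc0_map (tan_norms (sum_norms const_norms N))
           (\<lambda>m. U (Suc m) \<times> sum_levels const_levels L m) (tan_levels L) (tan_norms N)
           (\<lambda>(x, h). (f x, Df x h))"
    and \<delta>_germ: "sc0_germ const_levels const_norms (quadrant I) W L N \<delta>"
    and \<delta>_solution: "\<forall>v\<in>W 0. (v, \<delta> v) \<in> U 0 \<and> f (v, \<delta> v) = 0"
begin

abbreviation Q :: "(real ^ 'n) set" where "Q \<equiv> quadrant I"
abbreviation NE :: "nat \<Rightarrow> (real ^ 'n) \<times> 'e \<Rightarrow> real" where "NE \<equiv> sum_norms const_norms N"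

lemma sum_levels_const_levels: "sum_levels const_levels L m = UNIV \<times> L m"
  by (simp add: sum_levels_def const_levels_def)

lemma NE_level_norm: "level_norm (UNIV \<times> L m) (NE m)"
proof -
  have "level_norm (const_levels m) (const_norms m :: real ^ 'n \<Rightarrow> real)"
    using level_norm_const_norms by (simp add: const_levels_def)
  from level_norm_sum_norms[where LA = const_levels and NA = const_norms and LB = L and NB = N and m = m,
      OF this level_norm] show ?thesis
    by (simp add: sum_levels_const_levels)
qed

lemma NE_Pair: "NE m (v, u) = sqrt ((norm v)\<^sup>2 + (N m u)\<^sup>2)"
  by (simp add: sum_norms_def const_norms_def)

lemma NE_le_add: "u \<in> L m \<Longrightarrow> NE m (v, u) \<le> norm v + N m u"
  using sum_norms_le_add[of const_norms m v N u] level_norm_nonneg[OF level_norm]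
  by (simp add: const_norms_def)

lemma NE_ge: "norm v \<le> NE m (v, u)" "N m u \<le> NE m (v, u)"
  using sum_norms_ge[where NA = const_norms and NB = N and m = m and a = v and b = u]
  by (simp_all add: const_norms_def)

lemma NE_zero_left: "u \<in> L m \<Longrightarrow> NE m (0, u) = N m u"
  using level_norm_nonneg[OF level_norm] by (simp add: NE_Pair)

lemma NE_le_NE_Suc: "\<exists>C>0. \<forall>v. \<forall>u\<in>L (Suc m). NE m (v, u) \<le> C * NE (Suc m) (v, u)"
proof -
  obtain C where C: "C > 0" "\<And>u. u \<in> L (Suc m) \<Longrightarrow> N m u \<le> C * N (Suc m) u"
    using level_norm_le_level_norm[of m "Suc m"] by auto
  have "NE m (v, u) \<le> (1 + C) * NE (Suc m) (v, u)" if u: "u \<in> L (Suc m)" for v u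
  proof -
    have "u \<in> L m"
      using u level_Suc_subset by blast
    then have "NE m (v, u) \<le> norm v + C * N (Suc m) u"
      using NE_le_add[where u = u and m = m and v = v] C(2)[OF u] by simp
    also have "\<dots> \<le> NE (Suc m) (v, u) + C * NE (Suc m) (v, u)"
      using NE_ge[where v = v and m = "Suc m" and u = u] C(1) by (intro add_mono mult_left_mono) auto
    finally show ?thesis by (simp add: algebra_simps)
  qed
  then show ?thesis
    using C(1) by (intro exI[of _ "1 + C"]) auto
qed

definition level_open :: "nat \<Rightarrow> ((real ^ 'n) \<times> 'e) set \<Rightarrow> bool" where
  "level_open k A \<longleftrightarrow> A \<subseteq> Q \<times> L k \<and> (\<forall>q\<in>A. \<exists>e>0. \<forall>q'\<in>Q \<times> L k. NE k (q' - q) < e \<longrightarrow> q' \<in> A)"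

lemma U_germ: "nbhd_germ (sum_levels const_levels L) NE (Q \<times> UNIV) U"
  and f_sc0: "sc0_map NE U L N f"
  using contraction unfolding sc0_contraction_germ_def sc0_germ_def by auto

lemma U_Suc_subset: "U (Suc m) \<subseteq> U m"
  using U_germ[unfolded nbhd_germ_def, THEN conjunct1] by blast

lemma level_open_U: "level_open m (U m)" and zero_in_U: "0 \<in> U m"
  using U_germ[unfolded nbhd_germ_def, THEN conjunct2, rule_format, of m]
  unfolding level_open_def by (simp_all add: sum_levels_const_levels Times_Int_Times)

lemma U_antimono: "m \<le> n \<Longrightarrow> U n \<subseteq> U m"
  by (induction n rule: dec_induct) (use U_Suc_subset in auto)

lemma f_level: "q \<in> U m \<Longrightarrow> f q \<in> L m"
  using f_sc0[unfolded sc0_map_def, THEN conjunct2, THEN conjunct1] by blast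

definition B :: "(real ^ 'n) \<times> 'e \<Rightarrow> 'e" where "B q = snd q - f q"

definition contraction_radius :: "nat \<Rightarrow> real" where
  "contraction_radius m = (SOME r. r > 0 \<and> (\<forall>v u u'. (v, u) \<in> U m \<and> (v, u') \<in> U m \<and>
     NE m (v, u) < r \<and> NE m (v, u') < r \<longrightarrow> N m (B (v, u) - B (v, u')) \<le> 1/2 * N m (u - u')))"

lemma contraction_radius:
  "contraction_radius m > 0"
  "(v, u) \<in> U m \<Longrightarrow> (v, u') \<in> U m \<Longrightarrow> NE m (v, u) < contraction_radius m \<Longrightarrow>
     NE m (v, u') < contraction_radius m \<Longrightarrow> N m (B (v, u) - B (v, u')) \<le> 1/2 * N m (u - u')"
proof -
  have "\<exists>r>0. \<forall>v u u'. (v, u) \<in> U m \<and> (v, u') \<in> U m \<and> NE m (v, u) < r \<and> NE m (v, u') < r \<longrightarrow>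
      N m (B (v, u) - B (v, u')) \<le> 1/2 * N m (u - u')"
    using contraction[unfolded sc0_contraction_germ_def, THEN conjunct2, rule_format, of "1/2" m]
    by (simp add: B_def)
  from someI_ex[OF this] show "contraction_radius m > 0"
    "(v, u) \<in> U m \<Longrightarrow> (v, u') \<in> U m \<Longrightarrow> NE m (v, u) < contraction_radius m \<Longrightarrow>
     NE m (v, u') < contraction_radius m \<Longrightarrow> N m (B (v, u) - B (v, u')) \<le> 1/2 * N m (u - u')"
    unfolding contraction_radius_def[symmetric] by blast+
qed

lemma Df_bounded_linear: "q \<in> U 1 \<Longrightarrow> bounded_linear (Df q)"
  using Df_derivative[rule_format, of q, THEN conjunct1] .

lemma Df_approx:
  "q \<in> U 1 \<Longrightarrow> e > 0 \<Longrightarrow> \<exists>d>0. \<forall>h. q + h \<in> U 1 \<and> 0 < NE 1 h \<and> NE 1 h < d \<longrightarrow>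
     norm (f (q + h) - f q - Df q h) \<le> e * NE 1 h"
  using Df_derivative[rule_format, of q, THEN conjunct2, rule_format, of e] .

lemma Df_level: "q \<in> U (Suc m) \<Longrightarrow> w \<in> UNIV \<times> L m \<Longrightarrow> Df q w \<in> L m"
  using tangent_image[rule_format, of m] unfolding sum_levels_const_levels tan_levels_def by auto

lemma Df_continuous:
  assumes q: "q \<in> U (Suc m)" and w: "w \<in> UNIV \<times> L m" and e: "e > 0"
  shows "\<exists>d>0. \<forall>q' w'. q' \<in> U (Suc m) \<longrightarrow> w' \<in> UNIV \<times> L m \<longrightarrow> NE (Suc m) (q' - q) < d \<longrightarrow>
     NE m (w' - w) < d \<longrightarrow> N m (Df q' w' - Df q w) < e"
proof -
  have "\<exists>d>0. \<forall>p'\<in>U (Suc m) \<times> (UNIV \<times> L m). tan_norms NE m (p' - (q, w)) < d \<longrightarrow>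
      tan_norms N m ((\<lambda>(x, h). (f x, Df x h)) p' - (\<lambda>(x, h). (f x, Df x h)) (q, w)) < e"
    using tangent_sc0[unfolded sc0_map_def, THEN conjunct2, THEN conjunct2, rule_format, where m = m and x = "(q, w)" and e = e]
      q w e by (simp add: sum_levels_const_levels)
  then obtain d where d: "d > 0" and close: "\<And>q' w'. q' \<in> U (Suc m) \<Longrightarrow> w' \<in> UNIV \<times> L m \<Longrightarrow>
      tan_norms NE m ((q', w') - (q, w)) < d \<Longrightarrow> tan_norms N m ((f q', Df q' w') - (f q, Df q w)) < e"
    by auto
  show ?thesis
  proof (intro exI[of _ "d / 2"] conjI allI impI)
    fix q' w' assume q': "q' \<in> U (Suc m)" and w': "w' \<in> UNIV \<times> L m"
      and near: "NE (Suc m) (q' - q) < d / 2" "NE m (w' - w) < d / 2"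
    have "tan_norms NE m ((q', w') - (q, w)) \<le> NE (Suc m) (q' - q) + NE m (w' - w)"
      unfolding tan_norms_eq_sum_norms using sum_norms_le_add[of "\<lambda>m. NE (Suc m)" m "q' - q" NE "w' - w"]
      by (simp add: sum_norms_def)
    then have "tan_norms N m ((f q', Df q' w') - (f q, Df q w)) < e"
      using close[OF q' w'] near by simp
    moreover have "N m (Df q' w' - Df q w) \<le> tan_norms N m ((f q', Df q' w') - (f q, Df q w))"
      unfolding tan_norms_eq_sum_norms using sum_norms_ge(2) by simp
    ultimately show "N m (Df q' w' - Df q w) < e" by linarith
  qed (use d in simp)
qed

lemma U_level_mem: "q \<in> U m \<Longrightarrow> fst q \<in> Q \<and> snd q \<in> L m"
  using level_open_U[of m] unfolding level_open_def by (auto simp: mem_Times_iff)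

lemma B_level: "q \<in> U m \<Longrightarrow> B q \<in> L m"
  unfolding B_def using level_norm_diff_mem[OF level_norm U_level_mem[THEN conjunct2] f_level] .

definition contraction_zone :: "nat \<Rightarrow> ((real ^ 'n) \<times> 'e) set" where
  "contraction_zone m = {q \<in> U (Suc m). NE (Suc m) q < contraction_radius (Suc m) \<and> NE m q < contraction_radius m}"

lemma contraction_zone_U: "q \<in> contraction_zone m \<Longrightarrow> q \<in> U (Suc m)"
  by (simp add: contraction_zone_def)

lemma U_Suc_subset_U1: "U (Suc m) \<subseteq> U 1"
  by (simp add: U_antimono)

lemma contraction_zone_U1: "q \<in> contraction_zone m \<Longrightarrow> q \<in> U 1"
  using contraction_zone_U U_Suc_subset_U1 by blast

lemma zero_in_contraction_zone: "0 \<in> contraction_zone m"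
  using zero_in_U contraction_radius(1) level_norm_zero(2)[OF NE_level_norm]
  by (simp add: contraction_zone_def)

lemma level_open_contraction_zone: "level_open (Suc m) (contraction_zone m)"
  unfolding level_open_def
proof (intro conjI ballI)
  show "contraction_zone m \<subseteq> Q \<times> L (Suc m)"
    using level_open_U[of "Suc m"] unfolding contraction_zone_def level_open_def by blast
next
  fix q assume q: "q \<in> contraction_zone m"
  then have qU: "q \<in> U (Suc m)"
    by (rule contraction_zone_U)
  then have qS: "q \<in> UNIV \<times> L (Suc m)"
    using U_level_mem by (simp add: mem_Times_iff)
  obtain e1 where e1: "e1 > 0" "\<And>q'. q' \<in> Q \<times> L (Suc m) \<Longrightarrow> NE (Suc m) (q' - q) < e1 \<Longrightarrow> q' \<in> U (Suc m)"
    using level_open_U[of "Suc m"] qU unfolding level_open_def by blast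
  obtain C where C: "C > 0" "\<And>v u. u \<in> L (Suc m) \<Longrightarrow> NE m (v, u) \<le> C * NE (Suc m) (v, u)"
    using NE_le_NE_Suc by blast
  define e where "e = min e1 (min (contraction_radius (Suc m) - NE (Suc m) q)
    ((contraction_radius m - NE m q) / C))"
  have "e > 0"
    using e1 q C by (simp add: e_def contraction_zone_def)
  moreover have "q' \<in> contraction_zone m" if q': "q' \<in> Q \<times> L (Suc m)" "NE (Suc m) (q' - q) < e" for q'
  proof -
    have dS: "q' - q \<in> UNIV \<times> L (Suc m)"
      using q' qS level_norm_diff_mem[OF NE_level_norm] by blast
    then have dm: "q' - q \<in> UNIV \<times> L m" and qm: "q \<in> UNIV \<times> L m"
      using qS level_Suc_subset by (auto simp: mem_Times_iff)
    have "NE (Suc m) q' \<le> NE (Suc m) q + NE (Suc m) (q' - q)"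
      using level_norm_triangle[OF NE_level_norm qS dS] by simp
    then have Suc_m: "NE (Suc m) q' < contraction_radius (Suc m)"
      using q'(2) by (simp add: e_def)
    have "NE m (q' - q) \<le> C * NE (Suc m) (q' - q)"
      using C(2)[of "snd (q' - q)" "fst (q' - q)"] dS by (simp only: prod.collapse mem_Times_iff)
    also have "\<dots> < contraction_radius m - NE m q"
      using q'(2) C(1) by (simp add: e_def pos_less_divide_eq mult.commute)
    finally have "NE m q' < contraction_radius m"
      using level_norm_triangle[OF NE_level_norm qm dm] by simp
    then show ?thesis
      using e1(2)[OF q'(1)] q'(2) Suc_m by (simp add: contraction_zone_def e_def)
  qed
  ultimately show "\<exists>e>0. \<forall>q'\<in>Q \<times> L (Suc m). NE (Suc m) (q' - q) < e \<longrightarrow> q' \<in> contraction_zone m"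
    by blast
qed

lemma B_contraction_zone:
  assumes "(v, u) \<in> contraction_zone m" "(v, u') \<in> contraction_zone m" "k = m \<or> k = Suc m"
  shows "N k (B (v, u) - B (v, u')) \<le> 1/2 * N k (u - u')"
  using assms contraction_radius(2)[of v u k u'] U_Suc_subset by (auto simp: contraction_zone_def)

text \<open>The fibre derivative of \<open>B\<close>, as \<open>f (v, u) = u - B (v, u)\<close>.\<close>
definition DuB :: "(real ^ 'n) \<times> 'e \<Rightarrow> 'e \<Rightarrow> 'e" where
  "DuB q w = w - Df q (0, w)"

lemma DuB_level: "q \<in> U (Suc m) \<Longrightarrow> w \<in> L m \<Longrightarrow> DuB q w \<in> L m"
  unfolding DuB_def using Df_level[of q m "(0, w)"] level_norm_diff_mem[OF level_norm] by simp

lemma DuB_diff: "q \<in> U 1 \<Longrightarrow> DuB q (a - b) = DuB q a - DuB q b"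
  using linear_diff[OF bounded_linear.linear[OF Df_bounded_linear], of q "(0, a)" "(0, b)"]
  by (simp add: DuB_def)

lemma DuB_bounded:
  assumes q: "q \<in> U (Suc m)"
  shows "\<exists>K\<ge>0. \<forall>w\<in>L m. N m (DuB q w) \<le> K * N m w"
proof -
  interpret Df: bounded_linear "Df q"
    using Df_bounded_linear q U_Suc_subset_U1 by blast
  obtain d where d: "d > 0" and cont: "\<forall>q' w'. q' \<in> U (Suc m) \<longrightarrow> w' \<in> UNIV \<times> L m \<longrightarrow>
      NE (Suc m) (q' - q) < d \<longrightarrow> NE m (w' - 0) < d \<longrightarrow> N m (Df q' w' - Df q 0) < 1"
    using Df_continuous[OF q level_norm_zero(1)[OF NE_level_norm] zero_less_one] by blast
  have ball: "N m (Df q w') < 1" if "w' \<in> UNIV \<times> L m" "NE m w' < d" for w'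
    using cont[rule_format, OF q that(1)] that(2) d level_norm_zero(2)[OF NE_level_norm] by simp
  have Df_bound: "N m (Df q (0, w)) \<le> 2 / d * N m w" if w: "w \<in> L m" for w
  proof (rule level_norm_linear_bound[OF level_norm level_norm _ _ d _ w])
    show "Df q (0, a) \<in> L m" if "a \<in> L m" for a
      using Df_level[OF q] that by simp
    show "Df q (0, c *\<^sub>R a) = c *\<^sub>R Df q (0, a)" for c a
      using Df.scaleR[of c "(0, a)"] by simp
    show "N m (Df q (0, a)) \<le> 1" if "a \<in> L m" "N m a < d" for a
      using ball[of "(0, a)"] that NE_zero_left[of a m] by simp
  qed
  have "N m (DuB q w) \<le> (1 + 2 / d) * N m w" if w: "w \<in> L m" for w
  proof -
    have "N m (DuB q w) \<le> N m w + N m (Df q (0, w))"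
      unfolding DuB_def using level_norm_triangle_diff[OF level_norm w Df_level[OF q]] w by simp
    then show ?thesis
      using Df_bound[OF w] by (simp add: algebra_simps)
  qed
  then show ?thesis
    using d by (intro exI[of _ "1 + 2 / d"]) auto
qed

lemma NE_scaleR_zero_left: "w \<in> L m \<Longrightarrow> NE m (s *\<^sub>R (0, w)) = \<bar>s\<bar> * N m w"
  using level_norm_scaleR[OF NE_level_norm, of "(0, w)" m s] NE_zero_left[of w m] by simp

lemma B_difference_quotient:
  assumes q: "q \<in> U 1" and w: "w \<in> L 1" and s: "\<And>k. s k > 0" "s \<longlonglongrightarrow> 0"
    and in_U: "\<And>k. q + s k *\<^sub>R (0, w) \<in> U 1"
  shows "(\<lambda>k. (1 / s k) *\<^sub>R (B (q + s k *\<^sub>R (0, w)) - B q)) \<longlonglongrightarrow> DuB q w"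
proof (cases "w = 0")
  case True
  then show ?thesis
    using linear_0[OF bounded_linear.linear[OF Df_bounded_linear[OF q]]]
    by (simp add: DuB_def zero_prod_def[symmetric])
next
  case False
  interpret Df: bounded_linear "Df q"
    using Df_bounded_linear[OF q] .
  have Nw: "N 1 w > 0"
    using level_norm_nonneg[OF level_norm w] level_norm_eq_0_iff[OF level_norm w] False by linarith
  show ?thesis
  proof (rule LIMSEQ_I)
    fix e :: real assume e: "e > 0"
    obtain d where d: "d > 0" and approx: "\<And>h. q + h \<in> U 1 \<Longrightarrow> 0 < NE 1 h \<Longrightarrow> NE 1 h < d \<Longrightarrow>
        norm (f (q + h) - f q - Df q h) \<le> e / (2 * N 1 w) * NE 1 h"
      using Df_approx[OF q, of "e / (2 * N 1 w)"] e Nw by auto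
    obtain K where K: "\<And>k. k \<ge> K \<Longrightarrow> s k < d / N 1 w"
      using LIMSEQ_D[OF s(2), of "d / N 1 w"] d Nw s(1) by (metis abs_of_pos diff_zero divide_pos_pos real_norm_def)
    have "norm ((1 / s k) *\<^sub>R (B (q + s k *\<^sub>R (0, w)) - B q) - DuB q w) < e" if k: "k \<ge> K" for k
    proof -
      define h where "h = s k *\<^sub>R (0 :: real ^ 'n, w)"
      have NEh: "NE 1 h = s k * N 1 w"
        using NE_scaleR_zero_left[OF w] s(1)[of k] by (simp add: h_def)
      have "(1 / s k) *\<^sub>R (B (q + h) - B q) - DuB q w = - ((1 / s k) *\<^sub>R (f (q + h) - f q - Df q h))"
        using s(1)[of k] Df.scaleR[of "s k" "(0, w)"]
        by (simp add: h_def B_def DuB_def algebra_simps)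
      then have "norm ((1 / s k) *\<^sub>R (B (q + h) - B q) - DuB q w)
          = (1 / s k) * norm (f (q + h) - f q - Df q h)"
        using s(1)[of k] by simp
      also have "\<dots> \<le> (1 / s k) * (e / (2 * N 1 w) * NE 1 h)"
      proof (rule mult_left_mono)
        have "NE 1 h < d"
          using K[OF k] Nw unfolding NEh by (simp add: pos_less_divide_eq)
        moreover have "0 < NE 1 h"
          unfolding NEh using s(1)[of k] Nw by simp
        moreover have "q + h \<in> U 1"
          using in_U[of k] by (simp add: h_def)
        ultimately show "norm (f (q + h) - f q - Df q h) \<le> e / (2 * N 1 w) * NE 1 h"
          using approx by blast
      qed (use s(1)[of k] in simp)
      also have "\<dots> = e / 2"
        using s(1)[of k] Nw unfolding NEh by simp
      finally show ?thesis
        using e by (simp add: h_def)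
    qed
    then show "\<exists>K. \<forall>k\<ge>K. norm ((1 / s k) *\<^sub>R (B (q + s k *\<^sub>R (0, w)) - B q) - DuB q w) < e"
      by blast
  qed
qed

lemma contraction_zone_fibre_shift:
  assumes q: "q \<in> contraction_zone m" and w: "w \<in> L (Suc m)"
  obtains \<sigma> where "\<sigma> > 0" "\<And>s. 0 < s \<Longrightarrow> s \<le> \<sigma> \<Longrightarrow> q + s *\<^sub>R (0, w) \<in> contraction_zone m"
proof -
  obtain e where e: "e > 0" and zone: "\<And>q'. q' \<in> Q \<times> L (Suc m) \<Longrightarrow> NE (Suc m) (q' - q) < e \<Longrightarrow>
      q' \<in> contraction_zone m"
    using level_open_contraction_zone[of m] q unfolding level_open_def by blast
  define \<sigma> where "\<sigma> = e / (N (Suc m) w + 1)"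
  have \<sigma>: "\<sigma> > 0" "\<sigma> * N (Suc m) w < e"
    using e level_norm_nonneg[OF level_norm w] by (simp_all add: \<sigma>_def field_simps)
  have "q + s *\<^sub>R (0, w) \<in> contraction_zone m" if s: "0 < s" "s \<le> \<sigma>" for s
  proof (rule zone)
    have "q \<in> Q \<times> L (Suc m)" "s *\<^sub>R (0, w) \<in> UNIV \<times> L (Suc m)"
      using U_level_mem[OF contraction_zone_U[OF q]] level_norm_scaleR_mem[OF level_norm w]
      by (auto simp: mem_Times_iff)
    then show "q + s *\<^sub>R (0, w) \<in> Q \<times> L (Suc m)"
      using level_norm_add_mem[OF level_norm] by (auto simp: mem_Times_iff)
    have "NE (Suc m) (s *\<^sub>R (0, w)) \<le> \<sigma> * N (Suc m) w"
      using NE_scaleR_zero_left[OF w, of s] s level_norm_nonneg[OF level_norm w]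
      by (simp add: mult_right_mono)
    then show "NE (Suc m) (q + s *\<^sub>R (0, w) - q) < e"
      using \<sigma>(2) by simp
  qed
  with \<sigma>(1) show ?thesis
    by (rule that)
qed

lemma B_fibre_quotient_bound:
  assumes zone: "(v, u) \<in> contraction_zone m" "(v, u + s *\<^sub>R w) \<in> contraction_zone m"
    and w: "w \<in> L (Suc m)" and s: "s > 0" and j: "j = m \<or> j = Suc m"
  shows "N j ((1 / s) *\<^sub>R (B (v, u + s *\<^sub>R w) - B (v, u))) \<le> 1/2 * N j w"
proof -
  have wj: "w \<in> L j"
    using j w level_Suc_subset by auto
  have "B (v, u + s *\<^sub>R w) - B (v, u) \<in> L (Suc m)"
    using level_norm_diff_mem[OF level_norm B_level[OF contraction_zone_U[OF zone(2)]]
        B_level[OF contraction_zone_U[OF zone(1)]]] .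
  then have Bj: "B (v, u + s *\<^sub>R w) - B (v, u) \<in> L j"
    using j level_Suc_subset by auto
  have "N j ((1 / s) *\<^sub>R (B (v, u + s *\<^sub>R w) - B (v, u))) = (1 / s) * N j (B (v, u + s *\<^sub>R w) - B (v, u))"
    using level_norm_scaleR[OF level_norm Bj] s by simp
  also have "\<dots> \<le> (1 / s) * (1/2 * N j (s *\<^sub>R w))"
    using B_contraction_zone[OF zone(2,1) j] s by (intro mult_left_mono) auto
  also have "\<dots> = 1/2 * N j w"
    using level_norm_scaleR[OF level_norm wj] s by simp
  finally show ?thesis .
qed

lemma DuB_half_smooth:
  assumes q: "q \<in> contraction_zone m" and w: "w \<in> L (Suc m)"
  shows "N m (DuB q w) \<le> 1/2 * N m w"
proof -
  obtain \<sigma> where \<sigma>: "\<sigma> > 0" and shift: "\<And>s. 0 < s \<Longrightarrow> s \<le> \<sigma> \<Longrightarrow> q + s *\<^sub>R (0, w) \<in> contraction_zone m"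
    using contraction_zone_fibre_shift[OF q w] by blast
  obtain v u where vu: "q = (v, u)"
    by (cases q)
  define s where "s k = \<sigma> / (real k + 1)" for k
  have s: "s k > 0" "s k \<le> \<sigma>" for k
    using \<sigma> by (auto simp: s_def field_simps)
  have s_0: "s \<longlonglongrightarrow> 0"
    unfolding s_def by (intro tendsto_divide_0[OF tendsto_const]) real_asymp
  have shift_zone: "(v, u + s k *\<^sub>R w) \<in> contraction_zone m" for k
    using shift[OF s] by (simp add: vu)
  define x where "x k = (1 / s k) *\<^sub>R (B (v, u + s k *\<^sub>R w) - B (v, u))" for k
  have x_level: "x k \<in> L (Suc m)" for k
    unfolding x_def using level_norm_scaleR_mem[OF level_norm level_norm_diff_mem[OF level_norm B_level B_level]]
      contraction_zone_U shift_zone q vu by simp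
  have x_bound: "N j (x k) \<le> 1/2 * N j w" if "j = m \<or> j = Suc m" for j k
    unfolding x_def using B_fibre_quotient_bound[OF q[unfolded vu] shift_zone w s(1) that] .
  have "(\<lambda>k. (1 / s k) *\<^sub>R (B (q + s k *\<^sub>R (0, w)) - B q)) \<longlonglongrightarrow> DuB q w"
  proof (rule B_difference_quotient[OF contraction_zone_U1[OF q] _ s(1) s_0])
    show "w \<in> L 1"
      using w level_antimono[of 1 "Suc m"] by auto
    show "q + s k *\<^sub>R (0, w) \<in> U 1" for k
      using contraction_zone_U1[OF shift[OF s]] .
  qed
  moreover have "x = (\<lambda>k. (1 / s k) *\<^sub>R (B (q + s k *\<^sub>R (0, w)) - B q))"
    unfolding x_def vu by simp
  ultimately have "x \<longlonglongrightarrow> DuB q w"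
    by simp
  then show ?thesis
    using level_limit[of m "Suc m" x "1/2 * N (Suc m) w" "1/2 * N m w"] x_level x_bound by auto
qed

lemma DuB_half:
  assumes q: "q \<in> contraction_zone m" and w: "w \<in> L m"
  shows "N m (DuB q w) \<le> 1/2 * N m w"
proof -
  have qU: "q \<in> U (Suc m)"
    using contraction_zone_U[OF q] .
  obtain K where K: "K \<ge> 0" "\<And>w. w \<in> L m \<Longrightarrow> N m (DuB q w) \<le> K * N m w"
    using DuB_bounded[OF qU] by blast
  show ?thesis
  proof (rule level_norm_bound_by_density[OF level_norm, where D = "\<Inter>k. L k" and K = K])
    show "N m (DuB q y) \<le> 1/2 * N m y" if "y \<in> (\<Inter>k. L k)" for y
      using DuB_half_smooth[OF q] that by blast
    show "\<exists>y\<in>\<Inter>k. L k. N m (x - y) < e" if "x \<in> L m" "e > 0" for x e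
      using smooth_points_dense that .
    show "DuB q (x - y) = DuB q x - DuB q y" for x y
      using DuB_diff[OF contraction_zone_U1[OF q]] .
  qed (use DuB_level[OF qU] K w in auto)
qed

section \<open>The implicit derivative\<close>

lemma Df_Pair_split: "q \<in> U 1 \<Longrightarrow> Df q (e, z) = Df q (e, 0) + Df q (0, z)"
  using linear_add[OF bounded_linear.linear[OF Df_bounded_linear], of q "(e, 0)" "(0, z)"] by simp

lemma Df_fibre_injective:
  assumes q: "q \<in> contraction_zone 0" and z: "Df q (0, z) = 0"
  shows "z = 0"
proof -
  have "DuB q z = z"
    using z by (simp add: DuB_def)
  then have "norm z \<le> 1/2 * norm z"
    using DuB_half[OF q, of z] by (simp add: level_0 norm_level_0)
  then show ?thesis by simp
qed

lemma Df_solution_unique: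
  assumes q: "q \<in> contraction_zone 0" and "Df q (e, z) = 0" "Df q (e, z') = 0"
  shows "z = z'"
proof -
  have "Df q (0, z - z') = Df q (e, z) - Df q (e, z')"
    using linear_diff[OF bounded_linear.linear[OF Df_bounded_linear[OF contraction_zone_U1[OF q]]],
        of "(e, z)" "(e, z')"] by simp
  then have "Df q (0, z - z') = 0"
    using assms(2,3) by simp
  from Df_fibre_injective[OF q this] show ?thesis
    by simp
qed

text \<open>At \<open>q = (x, \<delta> x)\<close> this is \<open>D\<delta>(x) e = -(D\<^sub>uf(q))\<inverse> (D\<^sub>vf(q) e)\<close>.\<close>
definition implicit_derivative :: "(real ^ 'n) \<times> 'e \<Rightarrow> real ^ 'n \<Rightarrow> 'e" where
  "implicit_derivative q e = (SOME z. Df q (e, z) = 0)"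

text \<open>The solution is the fixed point of the contraction \<open>z \<mapsto> DuB q z - Df q (e, 0)\<close>.\<close>
lemma implicit_derivative:
  assumes q0: "q \<in> contraction_zone 0" and q: "q \<in> contraction_zone m"
  shows "Df q (e, implicit_derivative q e) = 0" "implicit_derivative q e \<in> L m"
proof -
  have qU: "q \<in> U (Suc m)" and q1: "q \<in> U 1"
    using contraction_zone_U[OF q] contraction_zone_U1[OF q] .
  define T where "T z = DuB q z - Df q (e, 0)" for z
  have e_level: "Df q (e, 0) \<in> L m"
    using Df_level[OF qU, of "(e, 0)"] level_norm_zero(1)[OF level_norm] by simp
  have "\<exists>z\<in>L m. T z = z"
  proof (rule level_contraction_fixpoint[OF level_norm level_complete])
    show "T z \<in> L m" if "z \<in> L m" for z
      unfolding T_def using level_norm_diff_mem[OF level_norm DuB_level[OF qU that] e_level] .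
    show "N m (T z - T z') \<le> 1/2 * N m (z - z')" if "z \<in> L m" "z' \<in> L m" for z z'
      using DuB_half[OF q level_norm_diff_mem[OF level_norm that]] DuB_diff[OF q1, of z z']
      by (simp add: T_def)
  qed auto
  then obtain z where z: "z \<in> L m" "T z = z"
    by blast
  have "Df q (e, z) = 0"
    using z(2) Df_Pair_split[OF q1, of e z] by (simp add: T_def DuB_def algebra_simps)
  then show solves: "Df q (e, implicit_derivative q e) = 0"
    unfolding implicit_derivative_def by (rule someI)
  show "implicit_derivative q e \<in> L m"
    using Df_solution_unique[OF q0 solves \<open>Df q (e, z) = 0\<close>] z(1) by simp
qed

lemma linear_implicit_derivative:
  assumes q: "q \<in> contraction_zone 0"
  shows "linear (implicit_derivative q)"
proof -
  interpret Df: bounded_linear "Df q"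
    using Df_bounded_linear[OF contraction_zone_U1[OF q]] .
  note solves = implicit_derivative(1)[OF q q]
  show ?thesis
  proof (rule linearI)
    fix a b
    have "Df q (a + b, implicit_derivative q a + implicit_derivative q b) = 0"
      using Df.add[of "(a, implicit_derivative q a)" "(b, implicit_derivative q b)"] solves by simp
    then show "implicit_derivative q (a + b) = implicit_derivative q a + implicit_derivative q b"
      using Df_solution_unique[OF q solves] by simp
  next
    fix c a
    have "Df q (c *\<^sub>R a, c *\<^sub>R implicit_derivative q a) = 0"
      using Df.scaleR[of c "(a, implicit_derivative q a)"] solves by simp
    then show "implicit_derivative q (c *\<^sub>R a) = c *\<^sub>R implicit_derivative q a"
      using Df_solution_unique[OF q solves] by simp
  qed
qed

lemma implicit_derivative_dist:
  assumes q0: "q \<in> contraction_zone 0" and q: "q \<in> contraction_zone m" and z: "z \<in> L m"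
  shows "N m (implicit_derivative q e - z) \<le> 2 * N m (Df q (e, z))"
proof -
  define z' where "z' = implicit_derivative q e"
  have z': "Df q (e, z') = 0" "z' \<in> L m"
    using implicit_derivative[OF q0 q] by (auto simp: z'_def)
  have dz: "z' - z \<in> L m"
    using level_norm_diff_mem[OF level_norm z'(2) z] .
  have "Df q (0, z' - z) = Df q (e, z') - Df q (e, z)"
    using linear_diff[OF bounded_linear.linear[OF Df_bounded_linear[OF contraction_zone_U1[OF q]]],
        of "(e, z')" "(e, z)"]
    by simp
  then have "z' - z = DuB q (z' - z) - Df q (e, z)"
    using z'(1) by (simp add: DuB_def)
  then have "N m (z' - z) \<le> N m (DuB q (z' - z)) + N m (Df q (e, z))"
    using level_norm_triangle_diff[OF level_norm DuB_level[OF contraction_zone_U[OF q] dz]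
        Df_level[OF contraction_zone_U[OF q], of "(e, z)"]] z by simp
  then show ?thesis
    using DuB_half[OF q dz] by (simp add: z'_def)
qed

lemma implicit_derivative_continuous:
  assumes p0: "p \<in> contraction_zone 0" and p: "p \<in> contraction_zone m" and \<epsilon>: "\<epsilon> > 0"
  shows "\<exists>d>0. \<forall>q g. q \<in> contraction_zone 0 \<longrightarrow> q \<in> contraction_zone m \<longrightarrow>
    NE (Suc m) (q - p) < d \<longrightarrow> norm (g - h) < d \<longrightarrow>
    N m (implicit_derivative q g - implicit_derivative p h) < \<epsilon>"
proof -
  define z where "z = implicit_derivative p h"
  have z: "Df p (h, z) = 0" "z \<in> L m"
    using implicit_derivative[OF p0 p] by (auto simp: z_def)
  obtain d where d: "d > 0" and cont: "\<forall>q' w'. q' \<in> U (Suc m) \<longrightarrow> w' \<in> UNIV \<times> L m \<longrightarrow>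
      NE (Suc m) (q' - p) < d \<longrightarrow> NE m (w' - (h, z)) < d \<longrightarrow> N m (Df q' w' - Df p (h, z)) < \<epsilon> / 2"
    using Df_continuous[OF contraction_zone_U[OF p], of "(h, z)" "\<epsilon> / 2"] z(2) \<epsilon> by auto
  have "N m (implicit_derivative q g - z) < \<epsilon>"
    if q0: "q \<in> contraction_zone 0" and q: "q \<in> contraction_zone m"
      and near: "NE (Suc m) (q - p) < d" "norm (g - h) < d" for q g
  proof -
    have "NE m ((g, z) - (h, z)) < d"
      using near(2) z(2) level_norm_zero(2)[OF level_norm] by (simp add: NE_Pair)
    then have "N m (Df q (g, z)) < \<epsilon> / 2"
      using cont[rule_format, OF contraction_zone_U[OF q] _ near(1)] z by simp
    then show ?thesis
      using implicit_derivative_dist[OF q0 q z(2), of g] by simp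
  qed
  then show ?thesis
    using d by (auto simp: z_def)
qed

lemma linear_Df_graph:
  assumes q: "q \<in> U 1" and p: "p \<in> contraction_zone 0"
  shows "linear (\<lambda>h. Df q (h, implicit_derivative p h))"
proof -
  have "linear (\<lambda>h. (h, implicit_derivative p h))"
    using linear_implicit_derivative[OF p] by (auto intro!: linearI simp: linear_add linear_scale)
  from linear_compose[OF this bounded_linear.linear[OF Df_bounded_linear[OF q]]] show ?thesis
    by (simp add: o_def)
qed

lemma Df_graph_uniformly_small:
  assumes p: "p \<in> contraction_zone 0" and \<eta>: "\<eta> > 0"
  shows "\<exists>d>0. \<forall>q h. q \<in> U 1 \<longrightarrow> NE 1 (q - p) < d \<longrightarrow>
    norm (Df q (h, implicit_derivative p h)) \<le> \<eta> * norm h"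
proof -
  define w where "w i = (axis i 1 :: real ^ 'n, implicit_derivative p (axis i 1))" for i
  define \<eta>' where "\<eta>' = \<eta> / real CARD('n)"
  have \<eta>': "\<eta>' > 0"
    using \<eta> by (simp add: \<eta>'_def)
  have "\<exists>d>0. \<forall>i\<in>UNIV. \<forall>q. q \<in> U 1 \<longrightarrow> NE 1 (q - p) < d \<longrightarrow> norm (Df q (w i) - Df p (w i)) < \<eta>'"
  proof (rule finite_common_radius)
    fix i
    have wi: "w i \<in> UNIV \<times> L 0"
      by (simp add: level_0)
    obtain d where d: "d > 0" and cont: "\<forall>q' w'. q' \<in> U (Suc 0) \<longrightarrow> w' \<in> UNIV \<times> L 0 \<longrightarrow>
        NE (Suc 0) (q' - p) < d \<longrightarrow> NE 0 (w' - w i) < d \<longrightarrow> N 0 (Df q' w' - Df p (w i)) < \<eta>'"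
      using Df_continuous[OF contraction_zone_U[OF p] wi \<eta>'] by blast
    have "norm (Df q (w i) - Df p (w i)) < \<eta>'" if "q \<in> U 1" "NE 1 (q - p) < d" for q
      using cont[rule_format, OF _ wi, of q] that d level_norm_zero(2)[OF NE_level_norm]
      by (simp add: norm_level_0)
    then show "\<exists>d>0. \<forall>q. q \<in> U 1 \<longrightarrow> NE 1 (q - p) < d \<longrightarrow> norm (Df q (w i) - Df p (w i)) < \<eta>'"
      using d by blast
  qed auto
  then obtain d where d: "d > 0" and close: "\<And>i q. q \<in> U 1 \<Longrightarrow> NE 1 (q - p) < d \<Longrightarrow>
      norm (Df q (w i) - Df p (w i)) < \<eta>'"
    by blast
  have "norm (Df q (h, implicit_derivative p h)) \<le> \<eta> * norm h"
    if q: "q \<in> U 1" "NE 1 (q - p) < d" for q h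
  proof -
    have "norm (Df q (h, implicit_derivative p h) - Df p (h, implicit_derivative p h))
        \<le> real CARD('n) * \<eta>' * norm h"
    proof (rule linear_diff_le_basis[OF linear_Df_graph[OF q(1) p] linear_Df_graph[OF contraction_zone_U1[OF p] p]])
      fix i
      show "norm (Df q (axis i 1, implicit_derivative p (axis i 1))
          - Df p (axis i 1, implicit_derivative p (axis i 1))) \<le> \<eta>'"
        using close[OF q, of i] by (simp add: w_def)
    qed
    then show ?thesis
      using implicit_derivative(1)[OF p p] by (simp add: \<eta>'_def)
  qed
  with d show ?thesis
    by (intro exI[of _ d]) simp
qed

lemma f_segment_derivative:
  assumes seg: "\<And>t. t \<in> {0..1} \<Longrightarrow> p + t *\<^sub>R w \<in> U 1" and w: "snd w \<in> L 1" and t: "t \<in> {0..1}"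
  shows "((\<lambda>t. f (p + t *\<^sub>R w)) has_derivative (\<lambda>s. s *\<^sub>R Df (p + t *\<^sub>R w) w)) (at t within {0..1})"
proof (cases "w = 0")
  case True
  then show ?thesis
    using linear_0[OF bounded_linear.linear[OF Df_bounded_linear[OF seg[OF t]]]] by simp
next
  case False
  define c where "c = NE 1 w"
  have wS: "w \<in> UNIV \<times> L 1"
    using w by (simp add: mem_Times_iff)
  have c: "c > 0"
    using level_norm_nonneg[OF NE_level_norm wS] level_norm_eq_0_iff[OF NE_level_norm wS] False
    unfolding c_def by linarith
  interpret Df: bounded_linear "Df (p + t *\<^sub>R w)"
    using Df_bounded_linear[OF seg[OF t]] .
  show ?thesis
    unfolding has_derivative_within_alt
  proof (intro conjI allI impI bounded_linear_scaleR_left)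
    fix e :: real assume e: "e > 0"
    obtain d where d: "d > 0" and approx: "\<And>h. p + t *\<^sub>R w + h \<in> U 1 \<Longrightarrow> 0 < NE 1 h \<Longrightarrow> NE 1 h < d \<Longrightarrow>
        norm (f (p + t *\<^sub>R w + h) - f (p + t *\<^sub>R w) - Df (p + t *\<^sub>R w) h) \<le> e / c * NE 1 h"
      using Df_approx[OF seg[OF t], of "e / c"] e c by auto
    have "norm (f (p + t' *\<^sub>R w) - f (p + t *\<^sub>R w) - (t' - t) *\<^sub>R Df (p + t *\<^sub>R w) w) \<le> e * norm (t' - t)"
      if t': "t' \<in> {0..1}" "norm (t' - t) < d / c" for t'
    proof (cases "t' = t")
      case False
      define h where "h = (t' - t) *\<^sub>R w"
      have NEh: "NE 1 h = \<bar>t' - t\<bar> * c"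
        using level_norm_scaleR[OF NE_level_norm wS] by (simp add: h_def c_def)
      have shift: "p + t *\<^sub>R w + h = p + t' *\<^sub>R w"
        by (simp add: h_def algebra_simps)
      have "norm (f (p + t *\<^sub>R w + h) - f (p + t *\<^sub>R w) - Df (p + t *\<^sub>R w) h) \<le> e / c * NE 1 h"
      proof (rule approx)
        show "p + t *\<^sub>R w + h \<in> U 1"
          unfolding shift using seg[OF t'(1)] .
        show "0 < NE 1 h" "NE 1 h < d"
          unfolding NEh using False c t'(2) by (simp_all add: pos_less_divide_eq)
      qed
      then show ?thesis
        unfolding shift NEh using c by (simp add: h_def Df.scaleR)
    qed simp
    then show "\<exists>d>0. \<forall>t'\<in>{0..1}. norm (t' - t) < d \<longrightarrow>
        norm (f (p + t' *\<^sub>R w) - f (p + t *\<^sub>R w) - (t' - t) *\<^sub>R Df (p + t *\<^sub>R w) w) \<le> e * norm (t' - t)"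
      using d c by (intro exI[of _ "d / c"]) auto
  qed
qed

text \<open>Mean value argument for \<open>t \<mapsto> f (p + t (h, k)) - t (k - \<Delta>)\<close>, whose derivative is
  \<open>Df(q)(h, \<Delta>) - DuB q (k - \<Delta>)\<close> at \<open>q = p + t (h, k)\<close>.\<close>
lemma fibre_increment_bound:
  assumes seg: "\<And>t. t \<in> {0..1} \<Longrightarrow> p + t *\<^sub>R (h, k) \<in> contraction_zone 0" and k: "k \<in> L 1"
    and ends: "f (p + (h, k)) = f p"
    and small: "\<And>t. t \<in> {0..1} \<Longrightarrow> norm (Df (p + t *\<^sub>R (h, k)) (h, \<Delta>)) \<le> \<eta> * norm h"
  shows "norm (k - \<Delta>) \<le> 2 * \<eta> * norm h"
proof -
  define pt where "pt t = p + t *\<^sub>R (h, k)" for t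
  define \<psi> where "\<psi> t = f (pt t) - t *\<^sub>R (k - \<Delta>)" for t
  define \<psi>' where "\<psi>' t = Df (pt t) (h, k) - (k - \<Delta>)" for t
  have deriv: "(\<psi> has_derivative (\<lambda>s. s *\<^sub>R \<psi>' t)) (at t within {0..1})" if t: "t \<in> {0..1}" for t
  proof -
    have "((\<lambda>t. f (pt t)) has_derivative (\<lambda>s. s *\<^sub>R Df (pt t) (h, k))) (at t within {0..1})"
      unfolding pt_def
    proof (rule f_segment_derivative[OF _ _ t])
      show "p + s *\<^sub>R (h, k) \<in> U 1" if "s \<in> {0..1}" for s
        using contraction_zone_U1[OF seg[OF that]] .
    qed (use k in simp)
    then show ?thesis
      unfolding \<psi>_def \<psi>'_def scaleR_diff_right
      by (intro derivative_eq_intros) auto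
  qed
  have bound: "onorm (\<lambda>s. s *\<^sub>R \<psi>' t) \<le> \<eta> * norm h + 1/2 * norm (k - \<Delta>)" if t: "t \<in> {0..1}" for t
  proof -
    have q: "pt t \<in> contraction_zone 0"
      using seg[OF t] by (simp add: pt_def)
    have "Df (pt t) (h, k) = Df (pt t) (h, \<Delta>) + Df (pt t) (0, k - \<Delta>)"
      using linear_add[OF bounded_linear.linear[OF Df_bounded_linear[OF contraction_zone_U1[OF q]]],
          of "(h, \<Delta>)" "(0, k - \<Delta>)"] by simp
    then have "\<psi>' t = Df (pt t) (h, \<Delta>) - DuB (pt t) (k - \<Delta>)"
      by (simp add: \<psi>'_def DuB_def)
    then have "norm (\<psi>' t) \<le> norm (Df (pt t) (h, \<Delta>)) + norm (DuB (pt t) (k - \<Delta>))"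
      by (simp add: norm_triangle_ineq4)
    also have "\<dots> \<le> \<eta> * norm h + 1/2 * norm (k - \<Delta>)"
      using small[OF t] DuB_half[OF q, of "k - \<Delta>"] by (intro add_mono) (simp_all add: pt_def level_0 norm_level_0)
    finally show ?thesis
      using onorm_scaleR_left[OF bounded_linear_ident, of "\<psi>' t"] onorm_id[where 'a = real] by simp
  qed
  have "norm (\<psi> 1 - \<psi> 0) \<le> (\<eta> * norm h + 1/2 * norm (k - \<Delta>)) * norm (1 - (0::real))"
    by (rule differentiable_bound[OF convex_real_interval(5) deriv bound]) auto
  moreover have "\<psi> 1 - \<psi> 0 = - (k - \<Delta>)"
    using ends by (simp add: \<psi>_def pt_def zero_prod_def[symmetric])
  ultimately have "norm (k - \<Delta>) \<le> \<eta> * norm h + 1/2 * norm (k - \<Delta>)"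
    by (simp add: norm_minus_commute)
  then show ?thesis
    by simp
qed

section \<open>The solution germ is of class \<open>sc\<^sup>1\<close>\<close>

lemma W_germ: "nbhd_germ const_levels const_norms Q W" and \<delta>_sc0: "sc0_map const_norms W L N \<delta>"
  using \<delta>_germ unfolding sc0_germ_def by auto

lemma W_Suc_subset: "W (Suc m) \<subseteq> W m"
  using W_germ[unfolded nbhd_germ_def, THEN conjunct1] by blast

lemma W_open: "openin (top_of_set Q) (W m)" and zero_in_W: "0 \<in> W m"
proof -
  have "W m \<subseteq> Q \<and> 0 \<in> W m \<and> (\<forall>x\<in>W m. \<exists>e>0. \<forall>y\<in>Q. norm (y - x) < e \<longrightarrow> y \<in> W m)"
    using W_germ[unfolded nbhd_germ_def, THEN conjunct2, rule_format, of m]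
    by (simp add: const_levels_def const_norms_def)
  then show "openin (top_of_set Q) (W m)" "0 \<in> W m"
    by (auto simp: openin_euclidean_subtopology_iff dist_norm)
qed

lemma \<delta>_zero: "\<delta> 0 = 0"
  using \<delta>_sc0 unfolding sc0_map_def by blast

lemma \<delta>_level: "x \<in> W m \<Longrightarrow> \<delta> x \<in> L m"
  using \<delta>_sc0[unfolded sc0_map_def, THEN conjunct2, THEN conjunct1] by blast

lemma \<delta>_continuous:
  "x \<in> W m \<Longrightarrow> e > 0 \<Longrightarrow> \<exists>d>0. \<forall>y\<in>W m. norm (y - x) < d \<longrightarrow> N m (\<delta> y - \<delta> x) < e"
  using \<delta>_sc0[unfolded sc0_map_def, THEN conjunct2, THEN conjunct2, rule_format, of x m e]
  by (simp add: const_norms_def)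

lemma graph_in_level: "x \<in> W m \<Longrightarrow> (x, \<delta> x) \<in> Q \<times> L m"
  using openin_subset[OF W_open] \<delta>_level by auto

lemma NE_graph_diff_le:
  "x \<in> W m \<Longrightarrow> y \<in> W m \<Longrightarrow> NE m ((y, \<delta> y) - (x, \<delta> x)) \<le> norm (y - x) + N m (\<delta> y - \<delta> x)"
  using NE_le_add level_norm_diff_mem[OF level_norm \<delta>_level \<delta>_level] by simp

lemma openin_graph_preimage:
  assumes A: "level_open k A"
  shows "openin (top_of_set Q) {x \<in> W k. (x, \<delta> x) \<in> A}"
  unfolding openin_euclidean_subtopology_iff dist_norm
proof (intro conjI ballI)
  show "{x \<in> W k. (x, \<delta> x) \<in> A} \<subseteq> Q"
    using openin_subset[OF W_open] by auto
next
  fix x assume "x \<in> {x \<in> W k. (x, \<delta> x) \<in> A}"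
  then have x: "x \<in> W k" "(x, \<delta> x) \<in> A" by auto
  obtain e where e: "e > 0" "\<And>q'. q' \<in> Q \<times> L k \<Longrightarrow> NE k (q' - (x, \<delta> x)) < e \<Longrightarrow> q' \<in> A"
    using A x(2) unfolding level_open_def by blast
  obtain d1 where d1: "d1 > 0" "\<And>y. y \<in> W k \<Longrightarrow> norm (y - x) < d1 \<Longrightarrow> N k (\<delta> y - \<delta> x) < e / 2"
    using \<delta>_continuous[OF x(1), of "e / 2"] e(1) by auto
  obtain d2 where d2: "d2 > 0" "\<And>y. y \<in> Q \<Longrightarrow> norm (y - x) < d2 \<Longrightarrow> y \<in> W k"
    using W_open[of k] x(1) unfolding openin_euclidean_subtopology_iff dist_norm by blast
  have "y \<in> {x \<in> W k. (x, \<delta> x) \<in> A}" if y: "y \<in> Q" "norm (y - x) < min (e / 2) (min d1 d2)" for y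
  proof -
    have yW: "y \<in> W k"
      using d2(2) y by simp
    have "NE k ((y, \<delta> y) - (x, \<delta> x)) < e"
      using NE_graph_diff_le[OF x(1) yW] d1(2)[OF yW] y(2) by simp
    then show ?thesis
      using e(2) graph_in_level[OF yW] yW by simp
  qed
  then show "\<exists>d>0. \<forall>y\<in>Q. norm (y - x) < d \<longrightarrow> y \<in> {x \<in> W k. (x, \<delta> x) \<in> A}"
    using e(1) d1(1) d2(1) by (intro exI[of _ "min (e / 2) (min d1 d2)"]) auto
qed

definition box_radius :: real where
  "box_radius = (SOME r. r > 0 \<and> (\<forall>v u. v \<in> Q \<longrightarrow> u \<in> L 1 \<longrightarrow> norm v < r \<longrightarrow> N 1 u < r \<longrightarrow>
     (v, u) \<in> contraction_zone 0))"

lemma box_radius: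
  "box_radius > 0"
  "v \<in> Q \<Longrightarrow> u \<in> L 1 \<Longrightarrow> norm v < box_radius \<Longrightarrow> N 1 u < box_radius \<Longrightarrow> (v, u) \<in> contraction_zone 0"
proof -
  obtain e where e: "e > 0" "\<And>q'. q' \<in> Q \<times> L 1 \<Longrightarrow> NE 1 (q' - 0) < e \<Longrightarrow> q' \<in> contraction_zone 0"
    using level_open_contraction_zone[of 0] zero_in_contraction_zone[of 0] unfolding level_open_def
    by fastforce
  have "(v, u) \<in> contraction_zone 0" if "v \<in> Q" "u \<in> L 1" "norm v < e / 2" "N 1 u < e / 2" for v u
    using e(2)[of "(v, u)"] NE_le_add[where u = u and m = 1 and v = v] that by simp
  then have "\<exists>r. r > 0 \<and> (\<forall>v u. v \<in> Q \<longrightarrow> u \<in> L 1 \<longrightarrow> norm v < r \<longrightarrow> N 1 u < r \<longrightarrow>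
      (v, u) \<in> contraction_zone 0)"
    using e(1) by (intro exI[of _ "e / 2"]) auto
  from someI_ex[OF this] show "box_radius > 0"
    "v \<in> Q \<Longrightarrow> u \<in> L 1 \<Longrightarrow> norm v < box_radius \<Longrightarrow> N 1 u < box_radius \<Longrightarrow> (v, u) \<in> contraction_zone 0"
    unfolding box_radius_def[symmetric] by blast+
qed

text \<open>A convex neighbourhood of \<open>0\<close> in \<open>Q \<times> E_1\<close> on which \<open>B\<close> contracts in levels \<open>0\<close> and \<open>1\<close>:
  the derivative of \<open>\<delta>\<close> is estimated along segments in it.\<close>
definition box :: "((real ^ 'n) \<times> 'e) set" where
  "box = (Q \<inter> ball 0 box_radius) \<times> {u \<in> L 1. N 1 u < box_radius}"

lemma convex_box: "convex box"
  unfolding box_def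
  by (intro convex_Times convex_Int convex_quadrant convex_ball level_norm_convex_ball[OF level_norm])

lemma box_contraction_zone: "box \<subseteq> contraction_zone 0"
  using box_radius(2) by (auto simp: box_def)

lemma zero_in_box: "0 \<in> box"
  using box_radius(1) level_norm_zero[OF level_norm] by (simp add: box_def zero_prod_def quadrant_def)

lemma level_open_box: "level_open 1 box"
  unfolding level_open_def
proof (intro conjI ballI)
  show "box \<subseteq> Q \<times> L 1"
    by (auto simp: box_def)
next
  fix q assume q: "q \<in> box"
  obtain v u where vu: "q = (v, u)"
    by (cases q)
  have u: "u \<in> L 1" and small: "norm v < box_radius" "N 1 u < box_radius"
    using q by (auto simp: box_def vu)
  define e where "e = min (box_radius - norm v) (box_radius - N 1 u)"
  have "q' \<in> box" if q': "q' \<in> Q \<times> L 1" "NE 1 (q' - q) < e" for q'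
  proof -
    obtain v' u' where vu': "q' = (v', u')"
      by (cases q')
    have u': "u' \<in> L 1" and v': "v' \<in> Q"
      using q' by (auto simp: vu')
    have "norm v' \<le> norm v + norm (v' - v)"
      by (metis add.commute diff_add_cancel norm_triangle_ineq)
    also have "\<dots> < box_radius"
      using NE_ge(1)[where v = "v' - v" and m = 1 and u = "u' - u"] q'(2) by (simp add: vu vu' e_def)
    finally have "norm v' < box_radius" .
    moreover have "N 1 u' \<le> N 1 u + N 1 (u' - u)"
      using level_norm_triangle[OF level_norm u level_norm_diff_mem[OF level_norm u' u]] by simp
    moreover have "N 1 (u' - u) < box_radius - N 1 u"
      using NE_ge(2)[where v = "v' - v" and m = 1 and u = "u' - u"] q'(2) by (simp add: vu vu' e_def)
    ultimately show ?thesis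
      using u' v' by (simp add: box_def vu')
  qed
  moreover have "e > 0"
    using small by (simp add: e_def)
  ultimately show "\<exists>e>0. \<forall>q'\<in>Q \<times> L 1. NE 1 (q' - q) < e \<longrightarrow> q' \<in> box"
    by blast
qed

definition contracting_domain :: "nat \<Rightarrow> (real ^ 'n) set" where
  "contracting_domain m = W (Suc m) \<inter> {x \<in> W 1. (x, \<delta> x) \<in> box}
     \<inter> (\<Inter>j\<le>m. {x \<in> W (Suc j). (x, \<delta> x) \<in> contraction_zone j})"

lemma contracting_domain_subset_W_Suc: "contracting_domain m \<subseteq> W (Suc m)"
  by (auto simp: contracting_domain_def)

lemma contracting_domain_subset_W: "contracting_domain m \<subseteq> W m"
  using contracting_domain_subset_W_Suc W_Suc_subset by blast

lemma contracting_domain_Suc_subset: "contracting_domain (Suc m) \<subseteq> contracting_domain m"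
  using W_Suc_subset by (auto simp: contracting_domain_def)

lemma contracting_domain_zone: "x \<in> contracting_domain m \<Longrightarrow> j \<le> m \<Longrightarrow> (x, \<delta> x) \<in> contraction_zone j"
  by (auto simp: contracting_domain_def)

lemma contracting_domain_box: "x \<in> contracting_domain m \<Longrightarrow> (x, \<delta> x) \<in> box"
  by (auto simp: contracting_domain_def)

lemma zero_in_contracting_domain: "0 \<in> contracting_domain m"
  using zero_in_W zero_in_box zero_in_contraction_zone by (simp add: contracting_domain_def \<delta>_zero zero_prod_def)

lemma openin_contracting_domain: "openin (top_of_set Q) (contracting_domain m)"
  unfolding contracting_domain_def
  by (intro openin_Int openin_INT2 W_open openin_graph_preimage level_open_box level_open_contraction_zone)
    auto

lemma \<delta>_derivative:
  assumes x: "x \<in> contracting_domain 0" and \<epsilon>: "\<epsilon> > 0"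
  shows "\<exists>d>0. \<forall>h. x + h \<in> contracting_domain 0 \<and> 0 < norm h \<and> norm h < d \<longrightarrow>
    norm (\<delta> (x + h) - \<delta> x - implicit_derivative (x, \<delta> x) h) \<le> \<epsilon> * norm h"
proof -
  define p where "p = (x, \<delta> x)"
  have p: "p \<in> contraction_zone 0"
    using contracting_domain_zone[OF x] by (simp add: p_def)
  obtain d0 where d0: "d0 > 0" and small: "\<And>q h. q \<in> U 1 \<Longrightarrow> NE 1 (q - p) < d0 \<Longrightarrow>
      norm (Df q (h, implicit_derivative p h)) \<le> \<epsilon> / 2 * norm h"
    using Df_graph_uniformly_small[OF p, of "\<epsilon> / 2"] \<epsilon> by auto
  have xW: "x \<in> W 1"
    using contracting_domain_subset_W_Suc x by auto
  obtain d1 where d1: "d1 > 0" and \<delta>_near: "\<And>y. y \<in> W 1 \<Longrightarrow> norm (y - x) < d1 \<Longrightarrow>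
      N 1 (\<delta> y - \<delta> x) < d0 / 2"
    using \<delta>_continuous[OF xW, of "d0 / 2"] d0 by auto
  have "norm (\<delta> (x + h) - \<delta> x - implicit_derivative p h) \<le> \<epsilon> * norm h"
    if y: "x + h \<in> contracting_domain 0" and near: "norm h < min d1 (d0 / 2)" for h
  proof -
    define k where "k = \<delta> (x + h) - \<delta> x"
    have yW: "x + h \<in> W 1"
      using contracting_domain_subset_W_Suc y by auto
    have k: "k \<in> L 1"
      unfolding k_def using level_norm_diff_mem[OF level_norm \<delta>_level[OF yW] \<delta>_level[OF xW]] .
    have hk: "(h, k) \<in> UNIV \<times> L 1"
      using k by simp
    have seg_box: "p + t *\<^sub>R (h, k) \<in> box" if t: "t \<in> {0..1}" for t
    proof -
      have "p + t *\<^sub>R (h, k) = (1 - t) *\<^sub>R p + t *\<^sub>R (x + h, \<delta> (x + h))"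
        by (simp add: p_def k_def algebra_simps)
      then show ?thesis
        using convexD[OF convex_box contracting_domain_box[OF x] contracting_domain_box[OF y]] t
        by (simp add: p_def)
    qed
    have "norm (Df (p + t *\<^sub>R (h, k)) (h, implicit_derivative p h)) \<le> \<epsilon> / 2 * norm h"
      if t: "t \<in> {0..1}" for t
    proof (rule small)
      show "p + t *\<^sub>R (h, k) \<in> U 1"
        using contraction_zone_U1 box_contraction_zone seg_box[OF t] by blast
      have "NE 1 (t *\<^sub>R (h, k)) \<le> NE 1 (h, k)"
        using level_norm_scaleR[OF NE_level_norm hk, of t] level_norm_nonneg[OF NE_level_norm hk] t
        by (simp add: mult_left_le_one_le)
      also have "\<dots> \<le> norm h + N 1 k"
        using NE_le_add[OF k] .
      also have "\<dots> < d0"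
        using near \<delta>_near[OF yW] by (simp add: k_def)
      finally show "NE 1 (p + t *\<^sub>R (h, k) - p) < d0"
        by simp
    qed
    moreover have "f (p + (h, k)) = f p"
    proof -
      have "x \<in> W 0" "x + h \<in> W 0"
        using xW yW W_Suc_subset by auto
      then show ?thesis
        using \<delta>_solution by (simp add: p_def k_def)
    qed
    ultimately have "norm (k - implicit_derivative p h) \<le> 2 * (\<epsilon> / 2) * norm h"
      using fibre_increment_bound[OF _ k] seg_box box_contraction_zone by blast
    then show ?thesis
      by (simp add: k_def)
  qed
  then show ?thesis
    using d0 d1 by (intro exI[of _ "min d1 (d0 / 2)"]) (simp add: p_def)
qed

definition D\<delta> :: "real ^ 'n \<Rightarrow> real ^ 'n \<Rightarrow> 'e" where
  "D\<delta> x = implicit_derivative (x, \<delta> x)"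

lemma D\<delta>_level: "x \<in> contracting_domain (Suc m) \<Longrightarrow> D\<delta> x h \<in> L m"
  unfolding D\<delta>_def using implicit_derivative(2) contracting_domain_zone by simp

lemma bounded_linear_D\<delta>: "x \<in> contracting_domain m \<Longrightarrow> bounded_linear (D\<delta> x)"
  unfolding D\<delta>_def
  using linear_conv_bounded_linear linear_implicit_derivative contracting_domain_zone by blast

lemma tangent_map_continuous:
  assumes x: "x \<in> contracting_domain (Suc m)" and \<epsilon>: "\<epsilon> > 0"
  shows "\<exists>d>0. \<forall>y g. y \<in> contracting_domain (Suc m) \<longrightarrow> norm (y - x) < d \<longrightarrow> norm (g - h) < d \<longrightarrow>
    N (Suc m) (\<delta> y - \<delta> x) < \<epsilon> \<and> N m (D\<delta> y g - D\<delta> x h) < \<epsilon>"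
proof -
  have zone: "(y, \<delta> y) \<in> contraction_zone 0" "(y, \<delta> y) \<in> contraction_zone m"
    if "y \<in> contracting_domain (Suc m)" for y
    using contracting_domain_zone[OF that] by auto
  obtain d1 where d1: "d1 > 0" and cont: "\<And>q g. q \<in> contraction_zone 0 \<Longrightarrow> q \<in> contraction_zone m \<Longrightarrow>
      NE (Suc m) (q - (x, \<delta> x)) < d1 \<Longrightarrow> norm (g - h) < d1 \<Longrightarrow>
      N m (implicit_derivative q g - implicit_derivative (x, \<delta> x) h) < \<epsilon>"
    using implicit_derivative_continuous[OF zone[OF x] \<epsilon>] by blast
  have xW: "x \<in> W (Suc m)"
    using contracting_domain_subset_W x by blast
  obtain d2 where d2: "d2 > 0" and \<delta>_near: "\<And>y. y \<in> W (Suc m) \<Longrightarrow> norm (y - x) < d2 \<Longrightarrow>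
      N (Suc m) (\<delta> y - \<delta> x) < min (d1 / 2) \<epsilon>"
    using \<delta>_continuous[OF xW, of "min (d1 / 2) \<epsilon>"] d1 \<epsilon> by auto
  have "N (Suc m) (\<delta> y - \<delta> x) < \<epsilon> \<and> N m (D\<delta> y g - D\<delta> x h) < \<epsilon>"
    if y: "y \<in> contracting_domain (Suc m)" and near: "norm (y - x) < min (d1 / 2) d2" "norm (g - h) < min (d1 / 2) d2"
    for y g
  proof -
    have yW: "y \<in> W (Suc m)"
      using contracting_domain_subset_W y by blast
    have "NE (Suc m) ((y, \<delta> y) - (x, \<delta> x)) < d1"
      using NE_graph_diff_le[OF xW yW] \<delta>_near[OF yW] near(1) by simp
    moreover have "norm (g - h) < d1"
      using near(2) norm_ge_zero[of "g - h"] by linarith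
    ultimately show ?thesis
      unfolding D\<delta>_def using cont[OF zone[OF y]] \<delta>_near[OF yW] near(1) by simp
  qed
  then show ?thesis
    using d1 d2 by (intro exI[of _ "min (d1 / 2) d2"]) simp
qed

lemma nbhd_germ_contracting_domain: "nbhd_germ const_levels const_norms Q contracting_domain"
  unfolding nbhd_germ_def const_levels_def const_norms_def
proof (intro conjI allI)
  fix m
  show "contracting_domain (Suc m) \<subseteq> contracting_domain m"
    by (rule contracting_domain_Suc_subset)
  have "contracting_domain m \<subseteq> Q \<and>
      (\<forall>x\<in>contracting_domain m. \<exists>e>0. \<forall>y\<in>Q. norm (y - x) < e \<longrightarrow> y \<in> contracting_domain m)"
    using openin_contracting_domain[of m] unfolding openin_euclidean_subtopology_iff dist_norm .
  then show "contracting_domain m \<subseteq> Q \<inter> UNIV"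
    "\<forall>x\<in>contracting_domain m. \<exists>e>0. \<forall>y\<in>Q \<inter> UNIV. norm (y - x) < e \<longrightarrow> y \<in> contracting_domain m"
    by simp_all
  show "0 \<in> contracting_domain m"
    by (rule zero_in_contracting_domain)
qed

lemma sc0_map_\<delta>: "sc0_map const_norms contracting_domain L N \<delta>"
  unfolding sc0_map_def const_norms_def
proof (intro conjI allI ballI impI)
  show "\<delta> 0 = 0"
    by (rule \<delta>_zero)
  fix m
  show "\<delta> ` contracting_domain m \<subseteq> L m"
    using contracting_domain_subset_W \<delta>_level by blast
  fix x and e :: real assume x: "x \<in> contracting_domain m" and e: "e > 0"
  have xW: "x \<in> W m"
    using contracting_domain_subset_W x by blast
  then show "\<exists>d>0. \<forall>y\<in>contracting_domain m. norm (y - x) < d \<longrightarrow> N m (\<delta> y - \<delta> x) < e"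
    using \<delta>_continuous[OF xW e] contracting_domain_subset_W by blast
qed

lemma tangent_image_\<delta>:
  "(\<lambda>(x, h). (\<delta> x, D\<delta> x h)) ` (contracting_domain (Suc m) \<times> (const_levels m :: (real ^ 'n) set))
     \<subseteq> tan_levels L m"
  using contracting_domain_subset_W \<delta>_level D\<delta>_level by (auto simp: tan_levels_def)

lemma tangent_norm_le:
  assumes "x \<in> contracting_domain (Suc m)" "y \<in> contracting_domain (Suc m)"
  shows "tan_norms N m ((\<delta> y, D\<delta> y g) - (\<delta> x, D\<delta> x h)) \<le> N (Suc m) (\<delta> y - \<delta> x) + N m (D\<delta> y g - D\<delta> x h)"
proof -
  have "\<delta> y - \<delta> x \<in> L (Suc m)" "D\<delta> y g - D\<delta> x h \<in> L m"
    using level_norm_diff_mem[OF level_norm] \<delta>_level D\<delta>_level contracting_domain_subset_W assms by blast+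
  then show ?thesis
    using sum_norms_le_add[where NA = "\<lambda>m. N (Suc m)" and NB = N and m = m
        and a = "\<delta> y - \<delta> x" and b = "D\<delta> y g - D\<delta> x h"] level_norm_nonneg[OF level_norm]
    by (simp add: tan_norms_eq_sum_norms)
qed

lemma tangent_sc0_\<delta>:
  "sc0_map (tan_norms const_norms) (\<lambda>m. contracting_domain (Suc m) \<times> (const_levels m :: (real ^ 'n) set))
     (tan_levels L) (tan_norms N) (\<lambda>(x, h). (\<delta> x, D\<delta> x h))"
  unfolding sc0_map_def
proof (intro conjI allI ballI impI)
  show "(\<lambda>(x, h). (\<delta> x, D\<delta> x h)) 0 = 0"
    using \<delta>_zero linear_0[OF bounded_linear.linear[OF bounded_linear_D\<delta>[OF zero_in_contracting_domain]]]
    by (simp add: zero_prod_def)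
  fix m
  show "(\<lambda>(x, h). (\<delta> x, D\<delta> x h)) ` (contracting_domain (Suc m) \<times> const_levels m) \<subseteq> tan_levels L m"
    by (rule tangent_image_\<delta>)
  fix p :: "(real ^ 'n) \<times> (real ^ 'n)" and e :: real
  assume p: "p \<in> contracting_domain (Suc m) \<times> const_levels m" and e: "e > 0"
  obtain x h where xh: "p = (x, h)"
    by (cases p)
  have x: "x \<in> contracting_domain (Suc m)"
    using p by (simp add: xh)
  obtain d where d: "d > 0" and close: "\<And>y g. y \<in> contracting_domain (Suc m) \<Longrightarrow> norm (y - x) < d \<Longrightarrow>
      norm (g - h) < d \<Longrightarrow> N (Suc m) (\<delta> y - \<delta> x) < e / 2 \<and> N m (D\<delta> y g - D\<delta> x h) < e / 2"
    using tangent_map_continuous[OF x, of "e / 2" h] e by auto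
  show "\<exists>d>0. \<forall>p'\<in>contracting_domain (Suc m) \<times> const_levels m. tan_norms const_norms m (p' - p) < d \<longrightarrow>
      tan_norms N m ((\<lambda>(x, h). (\<delta> x, D\<delta> x h)) p' - (\<lambda>(x, h). (\<delta> x, D\<delta> x h)) p) < e"
  proof (intro exI[of _ d] conjI ballI impI d)
    fix p' assume p': "p' \<in> contracting_domain (Suc m) \<times> const_levels m"
      and near: "tan_norms const_norms m (p' - p) < d"
    obtain y g where yg: "p' = (y, g)"
      by (cases p')
    have y: "y \<in> contracting_domain (Suc m)"
      using p' by (simp add: yg)
    have "norm (y - x) < d" "norm (g - h) < d"
      using near sum_norms_ge[where NA = "\<lambda>m. const_norms (Suc m)" and NB = const_norms and m = m
          and a = "y - x" and b = "g - h"]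
      by (simp_all add: tan_norms_eq_sum_norms const_norms_def xh yg)
    then show "tan_norms N m ((\<lambda>(x, h). (\<delta> x, D\<delta> x h)) p' - (\<lambda>(x, h). (\<delta> x, D\<delta> x h)) p) < e"
      using close[OF y, of g] tangent_norm_le[OF x y, of g h] by (simp add: xh yg)
  qed
qed

lemma sc1_germ_\<delta>: "sc1_germ const_levels const_norms Q contracting_domain L N \<delta>"
proof -
  have derivative: "\<forall>x\<in>contracting_domain 1. bounded_linear (D\<delta> x) \<and>
      (\<forall>e>0. \<exists>d>0. \<forall>h. x + h \<in> contracting_domain 1 \<and> 0 < const_norms 1 h \<and> const_norms 1 h < d \<longrightarrow>
         norm (\<delta> (x + h) - \<delta> x - D\<delta> x h) \<le> e * const_norms 1 h)"
  proof (intro ballI conjI allI impI)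
    fix x assume x: "x \<in> contracting_domain 1"
    then show "bounded_linear (D\<delta> x)"
      by (rule bounded_linear_D\<delta>)
    fix e :: real assume e: "e > 0"
    have x0: "x \<in> contracting_domain 0"
      using x contracting_domain_Suc_subset by auto
    obtain d where d: "d > 0" and approx: "\<forall>h. x + h \<in> contracting_domain 0 \<and> 0 < norm h \<and> norm h < d \<longrightarrow>
        norm (\<delta> (x + h) - \<delta> x - D\<delta> x h) \<le> e * norm h"
      using \<delta>_derivative[OF x0 e] unfolding D\<delta>_def by blast
    show "\<exists>d>0. \<forall>h. x + h \<in> contracting_domain 1 \<and> 0 < const_norms 1 h \<and> const_norms 1 h < d \<longrightarrow>
        norm (\<delta> (x + h) - \<delta> x - D\<delta> x h) \<le> e * const_norms 1 h"
    proof (intro exI[of _ d] conjI allI impI d)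
      fix h assume "x + h \<in> contracting_domain 1 \<and> 0 < const_norms 1 h \<and> const_norms 1 h < d"
      moreover have "contracting_domain 1 \<subseteq> contracting_domain 0"
        using contracting_domain_Suc_subset[of 0] by simp
      ultimately show "norm (\<delta> (x + h) - \<delta> x - D\<delta> x h) \<le> e * const_norms 1 h"
        using approx unfolding const_norms_def by blast
    qed
  qed
  have tangent_image: "\<forall>m. (\<lambda>(x, h). (\<delta> x, D\<delta> x h)) ` (contracting_domain (Suc m) \<times> const_levels m)
      \<subseteq> tan_levels L m"
    using tangent_image_\<delta> by blast
  show ?thesis
    unfolding sc1_germ_def sc0_germ_def
    using nbhd_germ_contracting_domain sc0_map_\<delta> derivative tangent_image tangent_sc0_\<delta>
    by (intro conjI exI[of _ D\<delta>])
qed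

end

theorem theorem2p3:
  fixes L :: "nat \<Rightarrow> 'e::banach set" and N :: "nat \<Rightarrow> 'e \<Rightarrow> real"
    and I :: "'n::finite set"
    and U :: "nat \<Rightarrow> ((real ^ 'n) \<times> 'e) set" and f :: "(real ^ 'n) \<times> 'e \<Rightarrow> 'e"
    and W :: "nat \<Rightarrow> (real ^ 'n) set" and \<delta> :: "real ^ 'n \<Rightarrow> 'e"
  assumes "sc_banach L N"
    and "sc0_contraction_germ (quadrant I) L N U f"
    and "sc1_germ (sum_levels const_levels L) (sum_norms const_norms N) (quadrant I \<times> UNIV) U L N f"
    and "sc0_germ const_levels const_norms (quadrant I) W L N \<delta>"
    and "\<forall>v\<in>W 0. (v, \<delta> v) \<in> U 0 \<and> f (v, \<delta> v) = 0"
  shows "\<exists>W'. (\<forall>m. W' m \<subseteq> W m) \<and>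
           sc1_germ const_levels const_norms (quadrant I) W' L N \<delta>"
proof -
  obtain Df where Df: "\<forall>x\<in>U 1. bounded_linear (Df x) \<and>
      (\<forall>e>0. \<exists>d>0. \<forall>h. x + h \<in> U 1 \<and> 0 < sum_norms const_norms N 1 h \<and>
         sum_norms const_norms N 1 h < d \<longrightarrow>
         norm (f (x + h) - f x - Df x h) \<le> e * sum_norms const_norms N 1 h)"
    "\<forall>m. (\<lambda>(x, h). (f x, Df x h)) ` (U (Suc m) \<times> sum_levels const_levels L m) \<subseteq> tan_levels L m"
    "sc0_map (tan_norms (sum_norms const_norms N)) (\<lambda>m. U (Suc m) \<times> sum_levels const_levels L m)
       (tan_levels L) (tan_norms N) (\<lambda>(x, h). (f x, Df x h))"
    using assms(3) unfolding sc1_germ_def by (elim conjE exE) assumption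
  interpret implicit_sc1 L N I U f W \<delta> Df
    using assms(1,2,4,5) Df by unfold_locales
  show ?thesis
    by (intro exI[of _ contracting_domain] conjI allI contracting_domain_subset_W sc1_germ_\<delta>)
qed

end
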